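(* Under the standing assumptions and assumption (A), there exists $C>0$ such that for all $\rho\in(0,\overline R)$ and $u\in L^2(D)\cap\mathcal{F}$, $$\mathcal{E}(u,u)\le C\big(\mathcal{E}^{(\rho)}(u,u)+(\rho\wedge R_0)^{-\alpha}\|u\|^2_{L^2(D)}\big).$$
   Context: Let $d\ge1$, $\alpha\in(0,2)$. $D\subset\mathbb{R}^d$ is a $\kappa$-fat open set (some $\kappa\in(0,1)$, localization constant $R_0\in(0,\mathrm{diam}(D)]$: for all $x\in\overline D$, $r\in(0,R_0)$ there is $z\in D$ with $B(z,\kappa r)\subset D\cap B(x,r)$) with Assouad dimension $\dim_{\rm A}(\partial D)<d$; $\gamma:=d-\dim_{\rm A}(\partial D)$; $\overline R:=\mathrm{diam}(D)\in(0,\infty]$; $\delta_D(x)=\mathrm{dist}(x,\partial D)$; $r\wedge\infty=r$. Assumption (A): $J$ symmetric Borel on $D\times D$, and there exist a continuous increasing $\Phi:[0,\infty)\to[1,\infty)$, $\Phi(0)=1$, with upper Matuszewska index $\overline\beta<\gamma\wedge\alpha$ ($\overline\beta$ = infimum of $\beta\ge0$ with $\Phi(r)/\Phi(s)\le C(r/s)^\beta$ for $0<s\le r$), $A_0\in(0,\infty]$, $C_1>1$ with $C_1^{-1}\le J(x,y)|x-y|^{d+\alpha}/\Phi\big(\frac{(|x-y|\wedge A_0)^2}{(\delta_D(x)\wedge A_0)(\delta_D(y)\wedge A_0)}\big)\le C_1$ for $x,y\in D$. $\mathcal{E}(u,v)=\frac12\int_{D\times D}(u(x)-u(y))(v(x)-v(y))J(x,y)dxdy$;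 $\mathcal{F}$ is the closure of $\mathrm{Lip}_c(\overline D)$ in $L^2(D)$ under $\mathcal{E}(u,u)+\|u\|^2_{L^2(D)}$. For $\rho\in(0,\overline R]$, $J^{(\rho)}(x,y)=\mathbf 1_{\{|x-y|<\rho\}}J(x,y)$ and $\mathcal{E}^{(\rho)}(u,v)=\frac12\int_{D\times D}(u(x)-u(y))(v(x)-v(y))J^{(\rho)}(x,y)dxdy$. *)

theory Defs
  imports "HOL-Analysis.Analysis"
begin

definition covering_number :: "'a::euclidean_space set \<Rightarrow> real \<Rightarrow> nat" where
  "covering_number A r = Inf {card F | F. finite F \<and> A \<subseteq> (\<Union>z\<in>F. ball z r)}"

(* Assouad dimension (ereal; Inf of empty set = \<infinity>) *)
definition assouad_dim :: "'a::euclidean_space set \<Rightarrow> ereal" where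
  "assouad_dim E = Inf {ereal s | s. s \<ge> 0 \<and> (\<exists>C>0. \<forall>x\<in>E. \<forall>r R. 0 < r \<and> r < R \<longrightarrow>
       real (covering_number (E \<inter> ball x R) r) \<le> C * (R / r) powr s)}"

definition upper_matuszewska :: "(real \<Rightarrow> real) \<Rightarrow> ereal" where
  "upper_matuszewska \<Phi> = Inf {ereal \<beta> | \<beta>. \<beta> \<ge> 0 \<and> (\<exists>C. \<forall>s r. 0 < s \<and> s \<le> r \<longrightarrow>
       \<Phi> r / \<Phi> s \<le> C * (r / s) powr \<beta>)}"

definition diam_e :: "'a::euclidean_space set \<Rightarrow> ereal" where
  "diam_e D = (if bounded D then ereal (diameter D) else \<infinity>)"

definition delta_e :: "'a::euclidean_space set \<Rightarrow> 'a \<Rightarrow> ereal" where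
  "delta_e D x = (if frontier D = {} then \<infinity> else ereal (infdist x (frontier D)))"

definition kappa_fat :: "'a::euclidean_space set \<Rightarrow> real \<Rightarrow> real \<Rightarrow> bool" where
  "kappa_fat D \<kappa> R0 \<longleftrightarrow> open D \<and> 0 < \<kappa> \<and> \<kappa> < 1 \<and> 0 < R0 \<and> ereal R0 \<le> diam_e D \<and>
     (\<forall>x\<in>closure D. \<forall>r. 0 < r \<and> r < R0 \<longrightarrow> (\<exists>z\<in>D. ball z (\<kappa> * r) \<subseteq> D \<inter> ball x r))"

definition kernel_arg :: "'a::euclidean_space set \<Rightarrow> ereal \<Rightarrow> 'a \<Rightarrow> 'a \<Rightarrow> real" where
  "kernel_arg D A0 x y = real_of_ereal ((min (ereal (dist x y)) A0) ^ 2 /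
      (min (delta_e D x) A0 * min (delta_e D y) A0))"

definition assumption_A :: "'a::euclidean_space set \<Rightarrow> real \<Rightarrow> ('a \<Rightarrow> 'a \<Rightarrow> real) \<Rightarrow> bool" where
  "assumption_A D \<alpha> J \<longleftrightarrow>
     (\<forall>x\<in>D. \<forall>y\<in>D. J x y = J y x) \<and>
     (\<lambda>p. if p \<in> D \<times> D then J (fst p) (snd p) else 0) \<in> borel_measurable borel \<and>
     (\<exists>\<Phi> A0 C1. continuous_on {0..} \<Phi> \<and> mono_on {0..} \<Phi> \<and> (\<forall>t\<ge>0. 1 \<le> \<Phi> t) \<and> \<Phi> 0 = 1 \<and>
        upper_matuszewska \<Phi> < min (ereal (real DIM('a)) - assouad_dim (frontier D)) (ereal \<alpha>) \<and>
        0 < A0 \<and> 1 < C1 \<and>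
        (\<forall>x\<in>D. \<forall>y\<in>D. x \<noteq> y \<longrightarrow>
           1 / C1 \<le> J x y * dist x y powr (real DIM('a) + \<alpha>) / \<Phi> (kernel_arg D A0 x y) \<and>
           J x y * dist x y powr (real DIM('a) + \<alpha>) / \<Phi> (kernel_arg D A0 x y) \<le> C1))"

definition jump_energy :: "('a::euclidean_space \<Rightarrow> 'a \<Rightarrow> real) \<Rightarrow> 'a set \<Rightarrow> ('a \<Rightarrow> real) \<Rightarrow> ennreal" where
  "jump_energy K D u = ennreal (1/2) *
     (\<integral>\<^sup>+ p. indicator (D \<times> D) p * ennreal ((u (fst p) - u (snd p))\<^sup>2 * K (fst p) (snd p)) \<partial>(lborel \<Otimes>\<^sub>M lborel))"

definition trunc_kernel :: "real \<Rightarrow> ('a::euclidean_space \<Rightarrow> 'a \<Rightarrow> real) \<Rightarrow> 'a \<Rightarrow> 'a \<Rightarrow> real" where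
  "trunc_kernel \<rho> J x y = (if dist x y < \<rho> then J x y else 0)"

definition l2sq :: "'a::euclidean_space set \<Rightarrow> ('a \<Rightarrow> real) \<Rightarrow> ennreal" where
  "l2sq D u = (\<integral>\<^sup>+ x. indicator D x * ennreal ((u x)\<^sup>2) \<partial>lborel)"

definition lip_c :: "'a::euclidean_space set \<Rightarrow> ('a \<Rightarrow> real) \<Rightarrow> bool" where
  "lip_c D \<phi> \<longleftrightarrow> (\<exists>L. L-lipschitz_on (closure D) \<phi>) \<and> compact (closure {x \<in> closure D. \<phi> x \<noteq> 0})"

(* u in L^2(D) \<inter> F: closure of Lip_c(closure D) w.r.t. E_1 = E + ||.||^2 *)
definition in_F :: "('a::euclidean_space \<Rightarrow> 'a \<Rightarrow> real) \<Rightarrow> 'a set \<Rightarrow> ('a \<Rightarrow> real) \<Rightarrow> bool" where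
  "in_F J D u \<longleftrightarrow> (\<lambda>x. indicator D x * u x) \<in> borel_measurable lborel \<and> l2sq D u < \<infinity> \<and>
     (\<exists>\<phi>::nat \<Rightarrow> 'a \<Rightarrow> real. (\<forall>n. lip_c D (\<phi> n)) \<and>
        (\<lambda>n. jump_energy J D (\<lambda>x. \<phi> n x - u x) + l2sq D (\<lambda>x. \<phi> n x - u x)) \<longlonglongrightarrow> 0)"

end

theory Submission
  imports Defs
begin

text \<open>
  Split \<open>J\<close> at distance \<open>\<rho>\<close>. The short-range part gives \<open>\<E>\<^sup>(\<^sup>\<rho>\<^sup>)\<close>; by symmetry and
  \<open>(u(x) - u(y))\<^sup>2 \<le> 2 u(x)\<^sup>2 + 2 u(y)\<^sup>2\<close>, the long-range part is at most the integral over \<open>D\<close>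
  of \<open>2 u(x)\<^sup>2 W(x)\<close>, where \<open>W(x)\<close> is the mass of \<open>J(x, \<cdot>)\<close> on \<open>{y \<in> D. \<rho> \<le> |x - y|}\<close>.

  Put \<open>r = \<rho> \<and> R\<^sub>0\<close> and \<open>q(x) = (r \<and> A\<^sub>0) / (\<delta>\<^sub>D(x) \<and> A\<^sub>0)\<close>. The upper bound in (A) and a dyadic
  decomposition give \<open>W(x) \<lesssim> \<Phi>(q(x)) r\<^sup>-\<^sup>\<alpha>\<close>; on the way \<open>\<delta>\<^sub>D\<^sup>-\<^sup>\<beta>\<close> has to be integrated over
  balls, which is possible because \<open>\<beta> < d - dim\<^sub>A \<partial>D\<close>. By fatness, the points \<open>w\<close> with
  \<open>|x - w| < r/2\<close> and \<open>\<delta>\<^sub>D(w) \<ge> \<kappa> r/4\<close> form a set of measure \<open>\<greatersim> r\<^sup>d\<close>, and for them the lower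
  bound in (A) gives \<open>J(x, w) \<greatersim> \<Phi>(q(x)) r\<^sup>-\<^sup>d\<^sup>-\<^sup>\<alpha>\<close>. Averaging
  \<open>2 u(x)\<^sup>2 \<le> 4 (u(x) - u(w))\<^sup>2 + 4 u(w)\<^sup>2\<close> over these \<open>w\<close> bounds \<open>u(x)\<^sup>2 W(x)\<close> by the
  short-range energy density at \<open>x\<close> plus \<open>r\<^sup>-\<^sup>\<alpha>\<^sup>-\<^sup>d\<close> times the integral of
  \<open>u(w)\<^sup>2 \<Phi>(q(x))\<close> over \<open>|x - w| < r/2\<close>; integrating the latter first in \<open>x\<close> leaves
  \<open>r\<^sup>-\<^sup>\<alpha> \<parallel>u\<parallel>\<^sup>2\<close>. If \<open>\<partial>D = {}\<close>, then \<open>J(x, y) \<asymp> |x - y|\<^sup>-\<^sup>d\<^sup>-\<^sup>\<alpha>\<close> and the dyadic step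
  alone suffices.
\<close>

section \<open>Tail integrals and averages\<close>

lemma exists_dyadic_scale:
  fixes a b :: real
  assumes "0 < b" "b \<le> a"
  obtains k :: nat where "b * 2 ^ k \<le> a" "a < b * 2 ^ Suc k"
proof -
  obtain n :: nat where "a / b < 2 ^ n" using real_arch_pow[of 2 "a / b"] by auto
  hence n: "a < b * 2 ^ n" using assms by (simp add: field_simps)
  define m where "m = (LEAST n. a < b * 2 ^ n)"
  have m: "a < b * 2 ^ m" unfolding m_def by (rule LeastI[of _ n]) (rule n)
  have "m \<noteq> 0" using m assms by (intro notI) simp
  then obtain k where k: "m = Suc k" by (cases m) auto
  have "\<not> a < b * 2 ^ k" using not_less_Least[of k "\<lambda>n. a < b * 2 ^ n"] m_def k by auto
  thus ?thesis using that m k by (simp add: not_less)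
qed

lemma suminf_ennreal_geometric:
  fixes c q :: real
  assumes "0 \<le> c" "0 \<le> q" "q < 1"
  shows "(\<Sum>k. ennreal (c * q ^ k)) = ennreal (c / (1 - q))"
proof (rule suminf_ennreal_eq)
  show "0 \<le> c * q ^ k" for k using assms by simp
  show "(\<lambda>k. c * q ^ k) sums (c / (1 - q))"
    using sums_mult[OF geometric_sums[of q], of c] assms by simp
qed

lemma ennreal_le_suminf: "(f :: nat \<Rightarrow> ennreal) k \<le> suminf f"
  using sum_le_suminf[of f "{k}"] by (simp add: summableI)

lemma pred_in_ball [measurable]: "Measurable.pred borel (\<lambda>y. y \<in> ball (x::'a::euclidean_space) R)"
  unfolding mem_ball by measurable

text \<open>A ball-growth bound \<open>\<integral>\<^sub>B\<^sub>(\<^sub>x\<^sub>,\<^sub>R\<^sub>) g \<le> K R\<^sup>\<theta>\<close> controls every dyadic annulus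
  \<open>\<rho> 2\<^sup>k \<le> |x - y| < \<rho> 2\<^sup>k\<^sup>+\<^sup>1\<close>, and the tail is a geometric series in \<open>k\<close>.\<close>

lemma nn_integral_dyadic_annulus_le:
  fixes g :: "'a::euclidean_space \<Rightarrow> ennreal"
  assumes [measurable]: "g \<in> borel_measurable borel"
    and growth: "\<And>R. 0 < R \<Longrightarrow> (\<integral>\<^sup>+y. indicator (ball x R) y * g y \<partial>lborel) \<le> ennreal (K * R powr \<theta>)"
    and "0 < \<rho>"
  shows "(\<integral>\<^sup>+y. ennreal ((\<rho> * 2 ^ k) powr p)
      * indicator {y. \<rho> * 2 ^ k \<le> dist x y \<and> dist x y < \<rho> * 2 ^ Suc k} y * g y \<partial>lborel)
    \<le> ennreal (K * 2 powr \<theta> * \<rho> powr (p + \<theta>) * (2 powr (p + \<theta>)) ^ k)"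
proof -
  define c where "c = (\<rho> * 2 ^ k) powr p"
  have "(\<integral>\<^sup>+y. ennreal c * indicator {y. \<rho> * 2 ^ k \<le> dist x y \<and> dist x y < \<rho> * 2 ^ Suc k} y * g y \<partial>lborel)
      \<le> (\<integral>\<^sup>+y. ennreal c * (indicator (ball x (\<rho> * 2 ^ Suc k)) y * g y) \<partial>lborel)"
    by (intro nn_integral_mono) (auto simp: indicator_def dist_commute)
  also have "\<dots> = ennreal c * (\<integral>\<^sup>+y. indicator (ball x (\<rho> * 2 ^ Suc k)) y * g y \<partial>lborel)"
    by (rule nn_integral_cmult) measurable
  also have "\<dots> \<le> ennreal c * ennreal (K * (\<rho> * 2 ^ Suc k) powr \<theta>)"
    using growth[of "\<rho> * 2 ^ Suc k"] \<open>0 < \<rho>\<close> by (intro mult_left_mono) auto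
  also have "\<dots> = ennreal (c * (K * (\<rho> * 2 ^ Suc k) powr \<theta>))"
    by (rule ennreal_mult'[symmetric]) (simp add: c_def)
  also have "c * (K * (\<rho> * 2 ^ Suc k) powr \<theta>) = K * 2 powr \<theta> * \<rho> powr (p + \<theta>) * (2 powr (p + \<theta>)) ^ k"
  proof -
    have "c = \<rho> powr p * 2 powr (k * p)" unfolding c_def using \<open>0 < \<rho>\<close>
      by (simp add: powr_mult powr_realpow[symmetric] powr_powr)
    moreover have "(\<rho> * 2 ^ Suc k) powr \<theta> = \<rho> powr \<theta> * 2 powr \<theta> * 2 powr (k * \<theta>)" using \<open>0 < \<rho>\<close>
      by (simp add: powr_mult powr_realpow[symmetric] powr_powr powr_add[symmetric] algebra_simps)
    moreover have "(2 powr (p + \<theta>)) ^ k = 2 powr (k * p) * 2 powr (k * \<theta>)"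
      by (simp add: powr_power powr_add[symmetric] algebra_simps)
    ultimately show ?thesis using \<open>0 < \<rho>\<close> by (simp add: powr_add algebra_simps)
  qed
  finally show ?thesis unfolding c_def .
qed

lemma nn_integral_dist_powr_tail_le:
  fixes g :: "'a::euclidean_space \<Rightarrow> ennreal"
  assumes [measurable]: "g \<in> borel_measurable borel"
    and growth: "\<And>R. 0 < R \<Longrightarrow> (\<integral>\<^sup>+y. indicator (ball x R) y * g y \<partial>lborel) \<le> ennreal (K * R powr \<theta>)"
    and "p + \<theta> < 0" "p \<le> 0" "0 < \<rho>" "0 \<le> K"
  shows "(\<integral>\<^sup>+y. indicator {y. \<rho> \<le> dist x y} y * ennreal (dist x y powr p) * g y \<partial>lborel)
    \<le> ennreal (K * 2 powr \<theta> * \<rho> powr (p + \<theta>) / (1 - 2 powr (p + \<theta>)))"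
proof -
  define A where "A k = {y. \<rho> * 2 ^ k \<le> dist x y \<and> dist x y < \<rho> * 2 ^ Suc k}" for k :: nat
  define c where "c k = (\<rho> * 2 ^ k) powr p" for k :: nat
  have [measurable]: "A k \<in> sets borel" for k unfolding A_def by measurable
  have pointwise: "indicator {y. \<rho> \<le> dist x y} y * ennreal (dist x y powr p) * g y
      \<le> (\<Sum>k. ennreal (c k) * indicator (A k) y * g y)" for y
  proof (cases "\<rho> \<le> dist x y")
    case True
    then obtain k where k: "\<rho> * 2 ^ k \<le> dist x y" "dist x y < \<rho> * 2 ^ Suc k"
      using exists_dyadic_scale \<open>0 < \<rho>\<close> by blast
    have "dist x y powr p \<le> c k" unfolding c_def using k \<open>0 < \<rho>\<close> \<open>p \<le> 0\<close> by (intro powr_mono2') auto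
    then have "indicator {y. \<rho> \<le> dist x y} y * ennreal (dist x y powr p) * g y
        \<le> ennreal (c k) * indicator (A k) y * g y"
      using k True by (auto simp: A_def intro!: mult_right_mono ennreal_leI)
    also have "\<dots> \<le> (\<Sum>k. ennreal (c k) * indicator (A k) y * g y)"
      by (rule ennreal_le_suminf)
    finally show ?thesis .
  qed simp
  have "(\<integral>\<^sup>+y. indicator {y. \<rho> \<le> dist x y} y * ennreal (dist x y powr p) * g y \<partial>lborel)
      \<le> (\<integral>\<^sup>+y. (\<Sum>k. ennreal (c k) * indicator (A k) y * g y) \<partial>lborel)"
    by (intro nn_integral_mono pointwise)
  also have "\<dots> = (\<Sum>k. \<integral>\<^sup>+y. ennreal (c k) * indicator (A k) y * g y \<partial>lborel)"
    by (rule nn_integral_suminf) measurable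
  also have "\<dots> \<le> (\<Sum>k. ennreal (K * 2 powr \<theta> * \<rho> powr (p + \<theta>) * (2 powr (p + \<theta>)) ^ k))"
    unfolding A_def c_def using nn_integral_dyadic_annulus_le[OF _ growth] assms
    by (intro suminf_le) auto
  also have "\<dots> = ennreal (K * 2 powr \<theta> * \<rho> powr (p + \<theta>) / (1 - 2 powr (p + \<theta>)))"
    using assms by (intro suminf_ennreal_geometric) (auto simp: powr_less_one)
  finally show ?thesis .
qed

lemma nn_integral_dist_powr_tail_le_lborel:
  fixes x :: "'a::euclidean_space" and p \<rho> :: real
  assumes "p + real DIM('a) < 0" "0 < \<rho>"
  shows "(\<integral>\<^sup>+y. indicator {y. \<rho> \<le> dist x y} y * ennreal (dist x y powr p) \<partial>lborel)
    \<le> ennreal (unit_ball_vol DIM('a) * 2 powr DIM('a) * \<rho> powr (p + real DIM('a))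
         / (1 - 2 powr (p + real DIM('a))))"
proof -
  have "(\<integral>\<^sup>+y. indicator (ball x R) y * 1 \<partial>lborel) \<le> ennreal (unit_ball_vol DIM('a) * R powr DIM('a))"
    if "0 < R" for R using that by (simp add: emeasure_ball powr_realpow)
  from nn_integral_dist_powr_tail_le[of "\<lambda>_. 1", OF _ this] show ?thesis using assms by simp
qed

lemma le_average_nn_integral:
  fixes X :: ennreal and f :: "'b \<Rightarrow> ennreal"
  assumes "S \<in> sets M" "ennreal m \<le> emeasure M S" "0 < m" "\<And>w. w \<in> S \<Longrightarrow> X \<le> f w"
  shows "X \<le> (\<integral>\<^sup>+w. indicator S w * (ennreal (1 / m) * f w) \<partial>M)"
proof -
  have "X = ennreal (1 / m) * ennreal m * X" using assms(3) by (simp add: ennreal_mult[symmetric])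
  also have "\<dots> \<le> ennreal (1 / m) * emeasure M S * X"
    using assms(2) by (intro mult_left_mono mult_right_mono) simp_all
  also have "\<dots> = (\<integral>\<^sup>+w. (ennreal (1 / m) * X) * indicator S w \<partial>M)"
    by (subst nn_integral_cmult_indicator[OF assms(1)]) (simp add: ac_simps)
  also have "\<dots> \<le> (\<integral>\<^sup>+w. indicator S w * (ennreal (1 / m) * f w) \<partial>M)"
    using assms(4) by (intro nn_integral_mono) (simp add: indicator_def mult_left_mono)
  finally show ?thesis .
qed

section \<open>Assouad dimension and integrability of the distance to a set\<close>

lemma borel_measurable_infdist [measurable]: "(\<lambda>x. infdist x F) \<in> borel_measurable borel"
  by (intro borel_measurable_continuous_onI continuous_intros)

definition covering_bound :: "'a::euclidean_space set \<Rightarrow> real \<Rightarrow> real \<Rightarrow> bool" where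
  "covering_bound F s C \<longleftrightarrow> (\<forall>x\<in>F. \<forall>r R. 0 < r \<and> r < R \<longrightarrow>
     real (covering_number (F \<inter> ball x R) r) \<le> C * (R / r) powr s)"

lemma covering_boundD:
  "covering_bound F s C \<Longrightarrow> x \<in> F \<Longrightarrow> 0 < r \<Longrightarrow> r < R \<Longrightarrow>
    real (covering_number (F \<inter> ball x R) r) \<le> C * (R / r) powr s"
  unfolding covering_bound_def by blast

lemma assouad_dim_lessE:
  assumes "assouad_dim F < b"
  obtains s C where "0 \<le> s" "ereal s < b" "0 < C" "covering_bound F s C"
proof -
  obtain s where "ereal s < b" "0 \<le> s" "\<exists>C>0. covering_bound F s C"
    using assms unfolding assouad_dim_def Inf_less_iff covering_bound_def by auto
  thus ?thesis using that by blast
qed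

lemma covering_number_attained:
  fixes A :: "'a::euclidean_space set"
  assumes "bounded A" "0 < r"
  obtains Z where "finite Z" "card Z = covering_number A r" "A \<subseteq> (\<Union>z\<in>Z. ball z r)"
proof -
  let ?S = "{card F | F. finite F \<and> A \<subseteq> (\<Union>z\<in>F. ball z r)}"
  obtain c M where cM: "A \<subseteq> cball c M" using assms(1) unfolding bounded_subset_cball by blast
  have "seq_compact (cball c M)" by (simp add: compact_imp_seq_compact)
  from seq_compact_imp_totally_bounded[OF this] assms(2)
  obtain k where k: "finite k" "cball c M \<subseteq> (\<Union>x\<in>k. ball x r)" by blast
  have "A \<subseteq> (\<Union>x\<in>k. ball x r)" using cM k(2) by (rule order_trans)
  hence "card k \<in> ?S" using k(1) by blast
  hence "Inf ?S \<in> ?S" by (intro Inf_nat_def1) blast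
  then obtain Z where "finite Z" "A \<subseteq> (\<Union>z\<in>Z. ball z r)" "card Z = Inf ?S" by auto
  thus ?thesis using that unfolding covering_number_def by blast
qed

lemma infdist_sublevel_subset_cover:
  fixes F :: "'a::euclidean_space set"
  assumes "closed F" "F \<noteq> {}" "p \<in> F" "dist p y1 \<le> t" "dist y1 y0 < R" "t \<le> R"
    and cover: "F \<inter> ball p (4 * R) \<subseteq> (\<Union>z\<in>Z. ball z t)"
  shows "{y \<in> ball y0 R. infdist y F \<le> t} \<subseteq> (\<Union>z\<in>Z. ball z (2 * t))"
proof
  fix y assume y: "y \<in> {y \<in> ball y0 R. infdist y F \<le> t}"
  obtain f where f: "f \<in> F" "infdist y F = dist y f"
    using infdist_attains_inf[OF assms(1,2)] by blast
  have "dist p f \<le> dist p y1 + dist y1 y0 + dist y0 y + dist y f"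
    using dist_triangle[of p f y1] dist_triangle[of y1 f y0] dist_triangle[of y0 f y] by linarith
  moreover have "dist y0 y < R" and yf: "dist y f \<le> t" using y f(2) by simp_all
  ultimately have "f \<in> F \<inter> ball p (4 * R)" using f(1) assms(4-6) by simp
  with cover have "f \<in> (\<Union>z\<in>Z. ball z t)" by (rule subsetD)
  then obtain z where z: "z \<in> Z" "dist z f < t" by auto
  have "dist z y < 2 * t" using dist_triangle[of z y f] z(2) yf by (simp add: dist_commute)
  thus "y \<in> (\<Union>z\<in>Z. ball z (2 * t))" using z(1) by auto
qed

lemma emeasure_infdist_sublevel_le:
  fixes F :: "'a::euclidean_space set"
  assumes "closed F" "F \<noteq> {}" and cov: "covering_bound F s C" and "0 < t" "t \<le> R"
  shows "emeasure lborel {y \<in> ball y0 R. infdist y F \<le> t}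
    \<le> ennreal (C * 4 powr s * unit_ball_vol DIM('a) * 2 ^ DIM('a) * R powr s * t powr (real DIM('a) - s))"
proof (cases "{y \<in> ball y0 R. infdist y F \<le> t} = {}")
  case True
  thus ?thesis by (simp only: True emeasure_empty) simp
next
  case False
  then obtain y1 where y1: "y1 \<in> ball y0 R" "infdist y1 F \<le> t" by auto
  obtain p where p: "p \<in> F" "infdist y1 F = dist y1 p"
    using infdist_attains_inf[OF assms(1,2)] by blast
  obtain Z where Z: "finite Z" "card Z = covering_number (F \<inter> ball p (4 * R)) t"
    "F \<inter> ball p (4 * R) \<subseteq> (\<Union>z\<in>Z. ball z t)"
    using covering_number_attained[of "F \<inter> ball p (4 * R)" t] \<open>0 < t\<close> by blast
  have "t < 4 * R" using assms(4,5) by simp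
  hence card: "real (card Z) \<le> C * (4 * R / t) powr s"
    unfolding Z(2) by (rule covering_boundD[OF cov p(1) \<open>0 < t\<close>])
  have "dist p y1 \<le> t" "dist y1 y0 < R" using y1 p(2) by (simp_all add: dist_commute)
  hence "{y \<in> ball y0 R. infdist y F \<le> t} \<subseteq> (\<Union>z\<in>Z. ball z (2 * t))"
    by (intro infdist_sublevel_subset_cover[OF assms(1,2) p(1) _ _ assms(5) Z(3)])
  hence "emeasure lborel {y \<in> ball y0 R. infdist y F \<le> t} \<le> emeasure lborel (\<Union>z\<in>Z. ball z (2 * t))"
    by (rule emeasure_mono) (auto intro!: borel_open)
  also have "\<dots> \<le> (\<Sum>z\<in>Z. emeasure lborel (ball z (2 * t)))"
    by (rule emeasure_subadditive_finite) (auto simp: Z(1))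
  also have "\<dots> = ennreal (real (card Z) * (unit_ball_vol DIM('a) * (2 * t) ^ DIM('a)))"
    using \<open>0 < t\<close> by (simp add: emeasure_ball ennreal_of_nat_eq_real_of_nat ennreal_mult')
  also have "\<dots> \<le> ennreal (C * (4 * R / t) powr s * (unit_ball_vol DIM('a) * (2 * t) ^ DIM('a)))"
    using card \<open>0 < t\<close> by (intro ennreal_leI mult_right_mono) auto
  also have "C * (4 * R / t) powr s * (unit_ball_vol DIM('a) * (2 * t) ^ DIM('a))
      = C * 4 powr s * unit_ball_vol DIM('a) * 2 ^ DIM('a) * R powr s * t powr (real DIM('a) - s)"
  proof -
    have "(4 * R / t) powr s = 4 powr s * R powr s / t powr s"
      using \<open>0 < t\<close> assms(5) by (simp add: powr_mult powr_divide)
    moreover have "(2 * t) ^ DIM('a) = 2 ^ DIM('a) * t powr DIM('a)"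
      using \<open>0 < t\<close> by (simp add: power_mult_distrib powr_realpow)
    moreover have "t powr (real DIM('a) - s) = t powr DIM('a) / t powr s"
      using \<open>0 < t\<close> by (simp add: powr_diff)
    ultimately show ?thesis by (simp add: field_simps)
  qed
  finally show ?thesis .
qed

lemma infdist_powr_le_layer_sum:
  assumes "0 \<le> \<beta>" "0 < R"
  shows "indicator (ball y0 R) y * ennreal (infdist y F powr (-\<beta>))
    \<le> ennreal (R powr (-\<beta>)) * indicator (ball y0 R) y
      + (\<Sum>k. ennreal ((R / 2 ^ Suc k) powr (-\<beta>)) * indicator {y \<in> ball y0 R. infdist y F \<le> R / 2 ^ k} y)"
    (is "_ \<le> _ + ?layers")
proof (cases "y \<in> ball y0 R")
  case y: True
  consider "infdist y F = 0" | "R \<le> infdist y F" | "0 < infdist y F" "infdist y F < R"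
    using infdist_nonneg[of y F] by linarith
  thus ?thesis
  proof cases
    case 2
    have "infdist y F powr (-\<beta>) \<le> R powr (-\<beta>)" using 2 assms by (intro powr_mono2') auto
    thus ?thesis using y by (intro add_increasing2) (auto intro: ennreal_leI)
  next
    case 3
    obtain k where k: "infdist y F * 2 ^ k \<le> R" "R < infdist y F * 2 ^ Suc k"
      using exists_dyadic_scale[of "infdist y F" R] 3 by auto
    have "R / 2 ^ Suc k \<le> infdist y F" using k by (simp add: field_simps del: power_Suc)
    hence "infdist y F powr (-\<beta>) \<le> (R / 2 ^ Suc k) powr (-\<beta>)" using assms by (intro powr_mono2') auto
    moreover have "infdist y F \<le> R / 2 ^ k" using k by (simp add: field_simps)
    ultimately have "indicator (ball y0 R) y * ennreal (infdist y F powr (-\<beta>))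
        \<le> ennreal ((R / 2 ^ Suc k) powr (-\<beta>)) * indicator {y \<in> ball y0 R. infdist y F \<le> R / 2 ^ k} y"
      using y by (simp add: ennreal_leI)
    also have "\<dots> \<le> ?layers" by (rule ennreal_le_suminf)
    finally show ?thesis by (rule add_increasing[rotated]) simp
  qed simp
qed simp

lemma nn_integral_infdist_layer_le:
  fixes F :: "'a::euclidean_space set"
  assumes "closed F" "F \<noteq> {}" "covering_bound F s C" "0 < R"
  shows "(\<integral>\<^sup>+y. ennreal ((R / 2 ^ Suc k) powr (-\<beta>))
      * indicator {y \<in> ball y0 R. infdist y F \<le> R / 2 ^ k} y \<partial>lborel)
    \<le> ennreal (C * 4 powr s * unit_ball_vol DIM('a) * 2 ^ DIM('a) * 2 powr \<beta> * R powr (real DIM('a) - \<beta>)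
         * (2 powr (\<beta> - (real DIM('a) - s))) ^ k)"
proof -
  let ?d = "real DIM('a)"
  define CV where "CV = C * 4 powr s * unit_ball_vol DIM('a) * 2 ^ DIM('a)"
  have t: "0 < R / 2 ^ k" "R / 2 ^ k \<le> R" using assms(4) by (auto simp: field_simps)
  have "(\<integral>\<^sup>+y. ennreal ((R / 2 ^ Suc k) powr (-\<beta>))
      * indicator {y \<in> ball y0 R. infdist y F \<le> R / 2 ^ k} y \<partial>lborel)
      = ennreal ((R / 2 ^ Suc k) powr (-\<beta>)) * emeasure lborel {y \<in> ball y0 R. infdist y F \<le> R / 2 ^ k}"
    by (rule nn_integral_cmult_indicator) measurable
  also have "\<dots> \<le> ennreal ((R / 2 ^ Suc k) powr (-\<beta>)) * ennreal (CV * R powr s * (R / 2 ^ k) powr (?d - s))"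
    using emeasure_infdist_sublevel_le[OF assms(1-3) t, of y0] by (intro mult_left_mono) (auto simp: CV_def)
  also have "\<dots> = ennreal ((R / 2 ^ Suc k) powr (-\<beta>) * (CV * R powr s * (R / 2 ^ k) powr (?d - s)))"
    by (rule ennreal_mult'[symmetric]) simp
  also have "(R / 2 ^ Suc k) powr (-\<beta>) * (CV * R powr s * (R / 2 ^ k) powr (?d - s))
      = CV * 2 powr \<beta> * R powr (?d - \<beta>) * (2 powr (\<beta> - (?d - s))) ^ k"
  proof -
    have e1: "(R / 2 ^ Suc k) powr (-\<beta>) = R powr (-\<beta>) * 2 powr \<beta> * 2 powr (k * \<beta>)"
      using assms(4) by (simp add: powr_divide powr_realpow[symmetric] powr_powr powr_minus powr_add
          powr_mult field_simps del: power_Suc)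
    have e2: "(R / 2 ^ k) powr (?d - s) = R powr (?d - s) / 2 powr (k * (?d - s))"
      using assms(4) by (simp add: powr_divide powr_realpow[symmetric] powr_powr)
    have "(2 powr (\<beta> - (?d - s))) ^ k = 2 powr (real k * (\<beta> - (?d - s)))"
      by (rule powr_power) simp
    also have "\<dots> = 2 powr (k * \<beta>) / 2 powr (k * (?d - s))"
      by (simp only: right_diff_distrib powr_diff)
    finally have e3: "(2 powr (\<beta> - (?d - s))) ^ k = 2 powr (k * \<beta>) / 2 powr (k * (?d - s))" .
    have e4: "R powr (?d - \<beta>) = R powr (-\<beta>) * R powr s * R powr (?d - s)"
      using assms(4) by (simp add: powr_add[symmetric])
    have "\<And>a b c e f X :: real. a * b * c * (CV * e * (f / X)) = CV * b * (a * e * f) * (c / X)"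
      by (simp add: field_simps)
    thus ?thesis unfolding e1 e2 e3 e4 .
  qed
  finally show ?thesis unfolding CV_def .
qed

text \<open>The layer \<open>infdist y F \<le> R/2\<^sup>k\<close> of a ball of radius \<open>R\<close> has volume
  \<open>\<lesssim> R\<^sup>s (R/2\<^sup>k)\<^sup>d\<^sup>-\<^sup>s\<close>, so the layers contribute a geometric series when \<open>\<beta> < d - s\<close>.\<close>

lemma infdist_powr_ball_integral_bound:
  fixes F :: "'a::euclidean_space set"
  assumes "closed F" "F \<noteq> {}" "covering_bound F s C" "0 \<le> C" "0 \<le> \<beta>" "\<beta> < real DIM('a) - s"
  obtains K where "0 \<le> K"
    "\<And>y0 R. 0 < R \<Longrightarrow> (\<integral>\<^sup>+y. indicator (ball y0 R) y * ennreal (infdist y F powr (-\<beta>)) \<partial>lborel)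
       \<le> ennreal (K * R powr (real DIM('a) - \<beta>))"
proof
  let ?d = "real DIM('a)"
  define CV where "CV = C * 4 powr s * unit_ball_vol DIM('a) * 2 ^ DIM('a) * 2 powr \<beta>"
  define q where "q = 2 powr (\<beta> - (?d - s))"
  have q: "0 \<le> q" "q < 1" unfolding q_def using assms(6) by (auto simp: powr_less_one)
  have CV: "0 \<le> CV" unfolding CV_def using assms(4) by simp
  show "0 \<le> unit_ball_vol ?d + CV / (1 - q)" using q CV by simp
  fix y0 :: 'a and R :: real assume "0 < R"
  define B where "B k = {y \<in> ball y0 R. infdist y F \<le> R / 2 ^ k}" for k :: nat
  define c where "c k = (R / 2 ^ Suc k) powr (-\<beta>)" for k :: nat
  have [measurable]: "B k \<in> sets borel" for k unfolding B_def by measurable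
  have "(\<integral>\<^sup>+y. indicator (ball y0 R) y * ennreal (infdist y F powr (-\<beta>)) \<partial>lborel)
      \<le> (\<integral>\<^sup>+y. ennreal (R powr (-\<beta>)) * indicator (ball y0 R) y
        + (\<Sum>k. ennreal (c k) * indicator (B k) y) \<partial>lborel)"
    unfolding B_def c_def using assms(5) \<open>0 < R\<close> by (intro nn_integral_mono infdist_powr_le_layer_sum)
  also have "\<dots> = ennreal (R powr (-\<beta>)) * emeasure lborel (ball y0 R)
      + (\<Sum>k. \<integral>\<^sup>+y. ennreal (c k) * indicator (B k) y \<partial>lborel)"
    by (simp add: nn_integral_add nn_integral_suminf nn_integral_cmult_indicator)
  also have "\<dots> \<le> ennreal (R powr (-\<beta>) * (unit_ball_vol ?d * R powr ?d))
      + (\<Sum>k. ennreal (CV * R powr (?d - \<beta>) * q ^ k))"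
    using nn_integral_infdist_layer_le[OF assms(1-3) \<open>0 < R\<close>] \<open>0 < R\<close>
    by (intro add_mono suminf_le)
      (auto simp: B_def c_def CV_def q_def emeasure_ball ennreal_mult powr_realpow)
  also have "(\<Sum>k. ennreal (CV * R powr (?d - \<beta>) * q ^ k)) = ennreal (CV * R powr (?d - \<beta>) / (1 - q))"
    using q CV by (intro suminf_ennreal_geometric) auto
  also have "ennreal (R powr (-\<beta>) * (unit_ball_vol ?d * R powr ?d))
      + ennreal (CV * R powr (?d - \<beta>) / (1 - q))
      = ennreal (R powr (-\<beta>) * (unit_ball_vol ?d * R powr ?d) + CV * R powr (?d - \<beta>) / (1 - q))"
    using q CV by (intro ennreal_plus[symmetric]) auto
  also have "R powr (-\<beta>) * (unit_ball_vol ?d * R powr ?d) + CV * R powr (?d - \<beta>) / (1 - q)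
      = (unit_ball_vol ?d + CV / (1 - q)) * R powr (?d - \<beta>)"
  proof -
    have "R powr (?d - \<beta>) = R powr (-\<beta>) * R powr ?d" using \<open>0 < R\<close> by (simp add: powr_add[symmetric])
    moreover have "\<And>a b w. a * (w * b) + CV * (a * b) / (1 - q) = (w + CV / (1 - q)) * (a * b)"
      using q by (simp add: field_simps)
    ultimately show ?thesis by simp
  qed
  finally show "(\<integral>\<^sup>+y. indicator (ball y0 R) y * ennreal (infdist y F powr (-\<beta>)) \<partial>lborel)
       \<le> ennreal ((unit_ball_vol ?d + CV / (1 - q)) * R powr (?d - \<beta>))" .
qed

section \<open>Splitting the jump energy at a distance\<close>

lemma measurable_lborel_pair_iff:
  "f \<in> borel_measurable (lborel \<Otimes>\<^sub>M lborel)
    \<longleftrightarrow> f \<in> borel_measurable (borel :: ('a::euclidean_space \<times> 'a) measure)"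
proof -
  have "sets (lborel \<Otimes>\<^sub>M lborel) = sets (borel \<Otimes>\<^sub>M borel :: ('a \<times> 'a) measure)"
    by (rule sets_pair_measure_cong) simp_all
  also have "\<dots> = sets (borel :: ('a \<times> 'a) measure)" by (metis borel_prod)
  finally show ?thesis using measurable_cong_sets[OF _ refl] by metis
qed

lemma nn_integral_lborel_pair_swap:
  fixes f :: "'a::euclidean_space \<times> 'a \<Rightarrow> ennreal"
  assumes [measurable]: "f \<in> borel_measurable (lborel \<Otimes>\<^sub>M lborel)"
  shows "(\<integral>\<^sup>+p. f (snd p, fst p) \<partial>(lborel \<Otimes>\<^sub>M lborel)) = (\<integral>\<^sup>+p. f p \<partial>(lborel \<Otimes>\<^sub>M lborel))"
proof -
  have "(\<integral>\<^sup>+p. f (snd p, fst p) \<partial>(lborel \<Otimes>\<^sub>M lborel)) = (\<integral>\<^sup>+x. \<integral>\<^sup>+y. f (y, x) \<partial>lborel \<partial>lborel)"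
    by (simp add: lborel.nn_integral_fst[symmetric])
  also have "\<dots> = (\<integral>\<^sup>+p. f p \<partial>(lborel \<Otimes>\<^sub>M lborel))"
    by (rule lborel_pair.nn_integral_snd) measurable
  finally show ?thesis .
qed

definition long_range_kernel :: "real \<Rightarrow> ('a::euclidean_space \<Rightarrow> 'a \<Rightarrow> real) \<Rightarrow> 'a \<Rightarrow> 'a \<Rightarrow> real" where
  "long_range_kernel \<rho> J x y = (if \<rho> \<le> dist x y then J x y else 0)"

definition jump_tail :: "'a::euclidean_space set \<Rightarrow> ('a \<Rightarrow> 'a \<Rightarrow> real) \<Rightarrow> real \<Rightarrow> 'a \<Rightarrow> ennreal" where
  "jump_tail D J \<rho> x = (\<integral>\<^sup>+y. indicator D y * indicator {y. \<rho> \<le> dist x y} y * ennreal (J x y) \<partial>lborel)"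

definition tail_energy :: "'a::euclidean_space set \<Rightarrow> ('a \<Rightarrow> 'a \<Rightarrow> real) \<Rightarrow> real \<Rightarrow> ('a \<Rightarrow> real) \<Rightarrow> ennreal" where
  "tail_energy D J \<rho> u = (\<integral>\<^sup>+x. indicator D x * ennreal (2 * (u x)\<^sup>2) * jump_tail D J \<rho> x \<partial>lborel)"

lemma borel_measurable_kernel_range:
  fixes J :: "'a::euclidean_space \<Rightarrow> 'a \<Rightarrow> real"
  assumes "(\<lambda>p. if p \<in> D \<times> D then J (fst p) (snd p) else 0) \<in> borel_measurable borel"
  shows "(\<lambda>p. if p \<in> D \<times> D then trunc_kernel \<rho> J (fst p) (snd p) else 0)
      \<in> borel_measurable (lborel \<Otimes>\<^sub>M lborel)"
    and "(\<lambda>p. if p \<in> D \<times> D then long_range_kernel \<rho> J (fst p) (snd p) else 0)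
        \<in> borel_measurable (lborel \<Otimes>\<^sub>M lborel)"
proof -
  define Jp where "Jp p = (if p \<in> D \<times> D then J (fst p) (snd p) else 0)" for p
  have [measurable]: "Jp \<in> borel_measurable (lborel \<Otimes>\<^sub>M lborel)"
    using assms unfolding Jp_def measurable_lborel_pair_iff by simp
  have "(\<lambda>p. if p \<in> D \<times> D then trunc_kernel \<rho> J (fst p) (snd p) else 0)
      = (\<lambda>p. if dist (fst p) (snd p) < \<rho> then Jp p else 0)"
    by (auto simp: trunc_kernel_def Jp_def)
  thus "(\<lambda>p. if p \<in> D \<times> D then trunc_kernel \<rho> J (fst p) (snd p) else 0)
      \<in> borel_measurable (lborel \<Otimes>\<^sub>M lborel)"
    by simp
  have "(\<lambda>p. if p \<in> D \<times> D then long_range_kernel \<rho> J (fst p) (snd p) else 0)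
      = (\<lambda>p. if \<rho> \<le> dist (fst p) (snd p) then Jp p else 0)"
    by (auto simp: long_range_kernel_def Jp_def)
  thus "(\<lambda>p. if p \<in> D \<times> D then long_range_kernel \<rho> J (fst p) (snd p) else 0)
      \<in> borel_measurable (lborel \<Otimes>\<^sub>M lborel)"
    by simp
qed

lemma borel_measurable_jump_integrand:
  fixes K :: "'a::euclidean_space \<Rightarrow> 'a \<Rightarrow> real"
  assumes "(\<lambda>p. if p \<in> D \<times> D then K (fst p) (snd p) else 0) \<in> borel_measurable (lborel \<Otimes>\<^sub>M lborel)"
    and "f \<in> borel_measurable (lborel \<Otimes>\<^sub>M lborel)"
  shows "(\<lambda>p. indicator (D \<times> D) p * ennreal (f p * K (fst p) (snd p)))
      \<in> borel_measurable (lborel \<Otimes>\<^sub>M lborel)"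
proof -
  have "(\<lambda>p. indicator (D \<times> D) p * ennreal (f p * K (fst p) (snd p)))
      = (\<lambda>p. ennreal (f p * (if p \<in> D \<times> D then K (fst p) (snd p) else 0)))"
    by (auto simp: indicator_def)
  thus ?thesis
    using measurable_compose[OF borel_measurable_times[OF assms(2,1)] measurable_ennreal] by simp
qed

lemma borel_measurable_jump_tail_integrand:
  fixes J :: "'a::euclidean_space \<Rightarrow> 'a \<Rightarrow> real"
  assumes "(\<lambda>p. if p \<in> D \<times> D then J (fst p) (snd p) else 0) \<in> borel_measurable borel"
    and "x \<in> D"
  shows "(\<lambda>y. indicator D y * indicator {y. \<rho> \<le> dist x y} y * ennreal (J x y)) \<in> borel_measurable lborel"
proof -
  define Jp where "Jp p = (if p \<in> D \<times> D then J (fst p) (snd p) else 0)" for p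
  have [measurable]: "Jp \<in> borel_measurable (lborel \<Otimes>\<^sub>M lborel)"
    using assms unfolding Jp_def measurable_lborel_pair_iff by simp
  have "(\<lambda>y. indicator D y * indicator {y. \<rho> \<le> dist x y} y * ennreal (J x y))
      = (\<lambda>y. indicator {y. \<rho> \<le> dist x y} y * ennreal (Jp (x, y)))"
    using \<open>x \<in> D\<close> by (auto simp: Jp_def indicator_def)
  thus ?thesis by simp
qed

lemma jump_energy_split_range:
  fixes J :: "'a::euclidean_space \<Rightarrow> 'a \<Rightarrow> real"
  assumes "(\<lambda>p. if p \<in> D \<times> D then J (fst p) (snd p) else 0) \<in> borel_measurable borel"
    and [measurable]: "u \<in> borel_measurable borel"
  shows "jump_energy J D u = jump_energy (trunc_kernel \<rho> J) D u + jump_energy (long_range_kernel \<rho> J) D u"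
proof -
  let ?f = "\<lambda>K p. indicator (D \<times> D) p * ennreal ((u (fst p) - u (snd p))\<^sup>2 * K (fst p) (snd p))"
  have "?f J p = ?f (trunc_kernel \<rho> J) p + ?f (long_range_kernel \<rho> J) p" for p
    by (simp add: trunc_kernel_def long_range_kernel_def)
  moreover have "?f (trunc_kernel \<rho> J) \<in> borel_measurable (lborel \<Otimes>\<^sub>M lborel)"
    "?f (long_range_kernel \<rho> J) \<in> borel_measurable (lborel \<Otimes>\<^sub>M lborel)"
    by (intro borel_measurable_jump_integrand borel_measurable_kernel_range[OF assms(1)]; measurable)+
  ultimately show ?thesis
    unfolding jump_energy_def by (simp add: nn_integral_add distrib_left)
qed

lemma nn_integral_long_range_eq_tail:
  fixes J :: "'a::euclidean_space \<Rightarrow> 'a \<Rightarrow> real"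
  assumes "(\<lambda>p. if p \<in> D \<times> D then J (fst p) (snd p) else 0) \<in> borel_measurable borel"
    and [measurable]: "f \<in> borel_measurable borel" and "\<And>x. 0 \<le> f x"
  shows "(\<integral>\<^sup>+p. indicator (D \<times> D) p * ennreal (f (fst p) * long_range_kernel \<rho> J (fst p) (snd p))
      \<partial>(lborel \<Otimes>\<^sub>M lborel))
    = (\<integral>\<^sup>+x. indicator D x * ennreal (f x) * jump_tail D J \<rho> x \<partial>lborel)"
proof -
  have [measurable]: "(\<lambda>p. indicator (D \<times> D) p * ennreal (f (fst p) * long_range_kernel \<rho> J (fst p) (snd p)))
      \<in> borel_measurable (lborel \<Otimes>\<^sub>M lborel)"
    by (intro borel_measurable_jump_integrand borel_measurable_kernel_range[OF assms(1)]) measurable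
  have "indicator (D \<times> D) (x, y) * ennreal (f x * long_range_kernel \<rho> J x y)
      = indicator D x * ennreal (f x)
        * (indicator D y * indicator {y. \<rho> \<le> dist x y} y * ennreal (J x y))" for x y
    using assms(3)[of x]
    by (cases "x \<in> D \<and> y \<in> D \<and> \<rho> \<le> dist x y") (auto simp: long_range_kernel_def ennreal_mult')
  moreover have "(\<integral>\<^sup>+y. indicator D x * ennreal (f x)
      * (indicator D y * indicator {y. \<rho> \<le> dist x y} y * ennreal (J x y)) \<partial>lborel)
      = indicator D x * ennreal (f x) * jump_tail D J \<rho> x" for x
  proof (cases "x \<in> D")
    case True
    show ?thesis unfolding jump_tail_def
      using nn_integral_cmult[OF borel_measurable_jump_tail_integrand[OF assms(1) True], of "ennreal (f x)"]
      by (simp add: True mult.assoc)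
  qed simp
  ultimately have "(\<integral>\<^sup>+x. \<integral>\<^sup>+y. indicator (D \<times> D) (x, y) * ennreal (f x * long_range_kernel \<rho> J x y)
      \<partial>lborel \<partial>lborel)
      = (\<integral>\<^sup>+x. indicator D x * ennreal (f x) * jump_tail D J \<rho> x \<partial>lborel)"
    by simp
  thus ?thesis by (simp add: lborel.nn_integral_fst[symmetric])
qed

lemma jump_energy_long_range_le:
  fixes J :: "'a::euclidean_space \<Rightarrow> 'a \<Rightarrow> real"
  assumes Jm: "(\<lambda>p. if p \<in> D \<times> D then J (fst p) (snd p) else 0) \<in> borel_measurable borel"
    and Jsym: "\<forall>x\<in>D. \<forall>y\<in>D. J x y = J y x"
    and Jpos: "\<And>x y. x \<in> D \<Longrightarrow> y \<in> D \<Longrightarrow> x \<noteq> y \<Longrightarrow> 0 \<le> J x y"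
    and [measurable]: "u \<in> borel_measurable borel" and "0 < \<rho>"
  shows "jump_energy (long_range_kernel \<rho> J) D u \<le> tail_energy D J \<rho> u"
proof -
  let ?M = "lborel \<Otimes>\<^sub>M lborel :: ('a \<times> 'a) measure"
  define g where "g p = indicator (D \<times> D) p
      * ennreal (2 * (u (fst p))\<^sup>2 * long_range_kernel \<rho> J (fst p) (snd p))" for p
  have [measurable]: "g \<in> borel_measurable ?M"
    unfolding g_def
      by (intro borel_measurable_jump_integrand borel_measurable_kernel_range[OF Jm]) measurable
  have pointwise: "indicator (D \<times> D) p
      * ennreal ((u (fst p) - u (snd p))\<^sup>2 * long_range_kernel \<rho> J (fst p) (snd p))
      \<le> g p + g (snd p, fst p)" for p
  proof (cases "p \<in> D \<times> D \<and> \<rho> \<le> dist (fst p) (snd p)")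
    case True
    obtain x y where p: "p = (x, y)" by (cases p)
    with True \<open>0 < \<rho>\<close> have xy: "x \<in> D" "y \<in> D" "x \<noteq> y" "\<rho> \<le> dist x y" by auto
    have "(u x - u y)\<^sup>2 \<le> 2 * (u x)\<^sup>2 + 2 * (u y)\<^sup>2"
      using sum_squares_ge_zero[of "u x + u y" 0] by (simp add: power2_eq_square algebra_simps)
    hence "(u x - u y)\<^sup>2 * J x y \<le> (2 * (u x)\<^sup>2 + 2 * (u y)\<^sup>2) * J x y"
      by (rule mult_right_mono[OF _ Jpos[OF xy(1-3)]])
    also have "\<dots> = 2 * (u x)\<^sup>2 * J x y + 2 * (u y)\<^sup>2 * J y x"
      using Jsym xy by (simp add: algebra_simps)
    finally show ?thesis using xy p Jpos[OF xy(1-3)] Jsym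
      by (simp add: g_def long_range_kernel_def dist_commute
        ennreal_plus[symmetric] ennreal_leI del: ennreal_plus)
  qed (auto simp: g_def long_range_kernel_def)
  have "jump_energy (long_range_kernel \<rho> J) D u \<le> ennreal (1/2) * (\<integral>\<^sup>+p. g p + g (snd p, fst p) \<partial>?M)"
    unfolding jump_energy_def by (intro mult_left_mono nn_integral_mono pointwise) simp
  also have "(\<integral>\<^sup>+p. g p + g (snd p, fst p) \<partial>?M) = 2 * (\<integral>\<^sup>+p. g p \<partial>?M)"
    by (simp add: nn_integral_add nn_integral_lborel_pair_swap mult_2)
  also have "ennreal (1/2) * (2 * (\<integral>\<^sup>+p. g p \<partial>?M)) = (\<integral>\<^sup>+p. g p \<partial>?M)"
    using ennreal_mult[of "1/2" 2] by (simp add: mult.assoc[symmetric])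
  also have "\<dots> = tail_energy D J \<rho> u"
    unfolding g_def tail_energy_def by (rule nn_integral_long_range_eq_tail[OF Jm]) auto
  finally show ?thesis .
qed

lemma jump_energy_le_trunc_plus_tail:
  fixes J :: "'a::euclidean_space \<Rightarrow> 'a \<Rightarrow> real"
  assumes "(\<lambda>p. if p \<in> D \<times> D then J (fst p) (snd p) else 0) \<in> borel_measurable borel"
    and "\<forall>x\<in>D. \<forall>y\<in>D. J x y = J y x"
    and "\<And>x y. x \<in> D \<Longrightarrow> y \<in> D \<Longrightarrow> x \<noteq> y \<Longrightarrow> 0 \<le> J x y"
    and "u \<in> borel_measurable borel" and "0 < \<rho>"
  shows "jump_energy J D u \<le> jump_energy (trunc_kernel \<rho> J) D u + tail_energy D J \<rho> u"
  unfolding jump_energy_split_range[OF assms(1,4), of \<rho>]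
  using jump_energy_long_range_le[OF assms] by (rule add_left_mono)

lemma jump_energy_le_of_tail_energy:
  fixes J :: "'a::euclidean_space \<Rightarrow> 'a \<Rightarrow> real"
  assumes "(\<lambda>p. if p \<in> D \<times> D then J (fst p) (snd p) else 0) \<in> borel_measurable borel"
    and "\<forall>x\<in>D. \<forall>y\<in>D. J x y = J y x"
    and "\<And>x y. x \<in> D \<Longrightarrow> y \<in> D \<Longrightarrow> x \<noteq> y \<Longrightarrow> 0 \<le> J x y"
    and "u \<in> borel_measurable borel" and "0 < \<rho>" and "0 \<le> K"
    and "tail_energy D J \<rho> u \<le> ennreal K * (jump_energy (trunc_kernel \<rho> J) D u + R)"
  shows "jump_energy J D u \<le> ennreal (1 + K) * (jump_energy (trunc_kernel \<rho> J) D u + R)"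
proof -
  let ?E = "jump_energy (trunc_kernel \<rho> J) D u"
  have "jump_energy J D u \<le> ?E + ennreal K * (?E + R)"
    using jump_energy_le_trunc_plus_tail[OF assms(1-5)] assms(7) by (meson add_left_mono order_trans)
  also have "\<dots> \<le> (?E + R) + ennreal K * (?E + R)" by (simp add: add_right_mono)
  also have "\<dots> = ennreal (1 + K) * (?E + R)" using assms(6) by (simp add: ennreal_plus distrib_right)
  finally show ?thesis .
qed

lemma jump_energy_trunc_eq_iterated:
  fixes J :: "'a::euclidean_space \<Rightarrow> 'a \<Rightarrow> real"
  assumes "(\<lambda>p. if p \<in> D \<times> D then J (fst p) (snd p) else 0) \<in> borel_measurable borel"
    and [measurable]: "u \<in> borel_measurable borel"
  shows "2 * jump_energy (trunc_kernel \<rho> J) D u = (\<integral>\<^sup>+x. \<integral>\<^sup>+w. indicator D x * indicator D w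
    * indicator {w. dist x w < \<rho>} w * ennreal ((u x - u w)\<^sup>2 * J x w) \<partial>lborel \<partial>lborel)"
proof -
  let ?f = "\<lambda>p. indicator (D \<times> D) p * ennreal ((u (fst p) - u (snd p))\<^sup>2 * trunc_kernel \<rho> J (fst p) (snd p))"
  have [measurable]: "?f \<in> borel_measurable (lborel \<Otimes>\<^sub>M lborel)"
    by (intro borel_measurable_jump_integrand borel_measurable_kernel_range[OF assms(1)]) measurable
  have "2 * jump_energy (trunc_kernel \<rho> J) D u = (\<integral>\<^sup>+p. ?f p \<partial>(lborel \<Otimes>\<^sub>M lborel))"
    unfolding jump_energy_def using ennreal_mult[of 2 "1/2"] by (simp add: mult.assoc[symmetric])
  also have "\<dots> = (\<integral>\<^sup>+x. \<integral>\<^sup>+w. ?f (x, w) \<partial>lborel \<partial>lborel)"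
    by (simp add: lborel.nn_integral_fst[symmetric])
  also have "\<dots> = (\<integral>\<^sup>+x. \<integral>\<^sup>+w. indicator D x * indicator D w
    * indicator {w. dist x w < \<rho>} w * ennreal ((u x - u w)\<^sup>2 * J x w) \<partial>lborel \<partial>lborel)"
    by (intro nn_integral_cong) (simp add: trunc_kernel_def indicator_def)
  finally show ?thesis .
qed

lemma kernel_arg_nonneg:
  assumes "0 < A0"
  shows "0 \<le> kernel_arg D A0 x y"
proof -
  have "0 \<le> min (delta_e D z) A0" for z using assms by (simp add: delta_e_def infdist_nonneg)
  moreover have "0 \<le> min (ereal (dist x y)) A0" using assms by simp
  ultimately show ?thesis
    unfolding kernel_arg_def by (intro real_of_ereal_pos zero_le_divide_ereal) (auto simp: power2_eq_square)
qed

definition kernel_comparable ::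
  "'a::euclidean_space set \<Rightarrow> ('a \<Rightarrow> 'a \<Rightarrow> real) \<Rightarrow> real \<Rightarrow> (real \<Rightarrow> real) \<Rightarrow> ereal \<Rightarrow> real \<Rightarrow> bool" where
  "kernel_comparable D J \<alpha> \<Phi> A0 C1 \<longleftrightarrow> (\<forall>x\<in>D. \<forall>y\<in>D. x \<noteq> y \<longrightarrow>
     1 / C1 \<le> J x y * dist x y powr (real DIM('a) + \<alpha>) / \<Phi> (kernel_arg D A0 x y) \<and>
     J x y * dist x y powr (real DIM('a) + \<alpha>) / \<Phi> (kernel_arg D A0 x y) \<le> C1)"

lemma kernel_comparableD:
  fixes J :: "'a::euclidean_space \<Rightarrow> 'a \<Rightarrow> real"
  assumes "kernel_comparable D J \<alpha> \<Phi> A0 C1" "x \<in> D" "y \<in> D" "x \<noteq> y"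
    and "1 \<le> \<Phi> (kernel_arg D A0 x y)" "0 < C1"
  shows "J x y \<le> C1 * \<Phi> (kernel_arg D A0 x y) * dist x y powr (-(real DIM('a) + \<alpha>))"
    and "\<Phi> (kernel_arg D A0 x y) \<le> C1 * J x y * dist x y powr (real DIM('a) + \<alpha>)"
    and "0 < J x y"
proof -
  let ?k = "\<Phi> (kernel_arg D A0 x y)" and ?L = "dist x y powr (real DIM('a) + \<alpha>)"
  have "0 < ?L" using assms(4) by simp
  have up: "J x y * ?L / ?k \<le> C1" and lo: "1 / C1 \<le> J x y * ?L / ?k"
    using assms(1-4) unfolding kernel_comparable_def by blast+
  from up have "J x y * ?L \<le> C1 * ?k" using assms(5) by (simp add: divide_le_eq)
  hence "J x y \<le> C1 * ?k / ?L" using \<open>0 < ?L\<close> by (simp add: pos_le_divide_eq)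
  thus "J x y \<le> C1 * ?k * dist x y powr (-(real DIM('a) + \<alpha>))" by (simp only: powr_minus divide_inverse)
  show "?k \<le> C1 * J x y * ?L" using lo assms(5,6) by (simp add: field_simps)
  hence "0 < C1 * J x y * ?L" using assms(5) by linarith
  thus "0 < J x y" using assms(6) \<open>0 < ?L\<close> by (simp add: zero_less_mult_iff)
qed

section \<open>Domains with nonempty boundary\<close>

text \<open>The data of assumption (A) when \<open>\<partial>D \<noteq> {}\<close>, with an exponent \<open>\<beta>\<close> for the upper
  Matuszewska index of \<open>\<Phi>\<close> and an exponent \<open>s\<close> for the Assouad dimension of \<open>\<partial>D\<close>.\<close>

locale fat_domain_kernel =
  fixes D :: "'a::euclidean_space set" and J :: "'a \<Rightarrow> 'a \<Rightarrow> real" and \<alpha> \<kappa> R0 :: real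
    and \<Phi> :: "real \<Rightarrow> real" and A0 :: ereal and C1 :: real and \<beta> C\<beta> s Cs :: real
  assumes fat: "kappa_fat D \<kappa> R0" and frontier_nonempty: "frontier D \<noteq> {}" and \<alpha>: "0 < \<alpha>"
    and \<Phi>_mono_on: "mono_on {0..} \<Phi>" and \<Phi>_ge_1: "\<forall>t\<ge>0. 1 \<le> \<Phi> t" and \<Phi>_cont: "continuous_on {0..} \<Phi>"
    and \<beta>: "0 \<le> \<beta>" "\<beta> < \<alpha>" and \<Phi>_growth: "\<forall>s r. 0 < s \<and> s \<le> r \<longrightarrow> \<Phi> r / \<Phi> s \<le> C\<beta> * (r / s) powr \<beta>"
    and cov: "covering_bound (frontier D) s Cs" and s: "0 \<le> s" "0 \<le> Cs" "\<beta> < real DIM('a) - s"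
    and A0: "0 < A0" and C1: "1 < C1"
    and J_measurable: "(\<lambda>p. if p \<in> D \<times> D then J (fst p) (snd p) else 0) \<in> borel_measurable borel"
    and J_comparable: "kernel_comparable D J \<alpha> \<Phi> A0 C1"
begin

lemma open_D: "open D" and \<kappa>: "0 < \<kappa>" "\<kappa> < 1" and R0: "0 < R0"
  and fat_ball: "\<And>x r. x \<in> closure D \<Longrightarrow> 0 < r \<Longrightarrow> r < R0 \<Longrightarrow> \<exists>z\<in>D. ball z (\<kappa> * r) \<subseteq> D \<inter> ball x r"
  using fat unfolding kappa_fat_def by auto

lemma sets_D [measurable]: "D \<in> sets borel"
  using open_D by (rule borel_open)

definition \<delta> :: "'a \<Rightarrow> real" where "\<delta> x = infdist x (frontier D)"

definition cap :: "real \<Rightarrow> real" where "cap t = real_of_ereal (min (ereal t) A0)"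

definition q :: "real \<Rightarrow> 'a \<Rightarrow> real" where "q r x = cap r / cap (\<delta> x)"

lemma cap_cases:
  obtains a where "0 < a" "\<And>t. cap t = min t a" "\<And>t. min (ereal t) A0 = ereal (min t a)"
  | "\<And>t. cap t = t" "\<And>t. min (ereal t) A0 = ereal t"
proof (cases A0)
  case (real a)
  show ?thesis
  proof (rule that(1)[of a])
    show "0 < a" using A0 real by simp
    show "cap t = min t a" for t unfolding cap_def using real by (simp add: min_def)
    show "min (ereal t) A0 = ereal (min t a)" for t using real by (simp add: min_def)
  qed
next
  case PInf
  show ?thesis
  proof (rule that(2))
    show "cap t = t" for t unfolding cap_def using PInf by simp
    show "min (ereal t) A0 = ereal t" for t using PInf by simp
  qed
qed (use A0 in simp)

lemma min_A0_eq_cap: "min (ereal t) A0 = ereal (cap t)"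
  by (cases rule: cap_cases) auto

lemma cap_nonneg: "0 \<le> t \<Longrightarrow> 0 \<le> cap t" and cap_pos: "0 < t \<Longrightarrow> 0 < cap t"
  and cap_zero: "cap 0 = 0" and cap_mono: "t \<le> t' \<Longrightarrow> cap t \<le> cap t'"
  by (cases rule: cap_cases; auto)+

lemma cap_scale: "0 \<le> c \<Longrightarrow> c \<le> 1 \<Longrightarrow> 0 \<le> t \<Longrightarrow> c * cap t \<le> cap (c * t)"
proof (cases rule: cap_cases)
  case (1 a)
  assume c: "0 \<le> c" "c \<le> 1" and "0 \<le> t"
  have "c * t \<le> t" "c * a \<le> a" using c \<open>0 \<le> t\<close> 1(1) by (simp_all add: mult_left_le_one_le)
  thus ?thesis using c 1 by (auto simp: min_def intro: mult_left_mono)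
qed auto

lemma cap_ratio_le: "0 < t \<Longrightarrow> 0 \<le> t' \<Longrightarrow> cap t' / cap t \<le> max 1 (t' / t)"
proof (cases rule: cap_cases)
  case (1 a)
  assume "0 < t" "0 \<le> t'"
  show ?thesis
  proof (cases "t \<le> a")
    case True
    hence "cap t' / cap t = min t' a / t" using 1 by simp
    also have "\<dots> \<le> t' / t" using \<open>0 < t\<close> by (intro divide_right_mono) auto
    finally show ?thesis by simp
  next
    case False
    hence "cap t' / cap t = min t' a / a" using 1 by simp
    also have "\<dots> \<le> 1" using 1 by simp
    finally show ?thesis by simp
  qed
qed auto

lemma \<delta>_nonneg: "0 \<le> \<delta> x"
  unfolding \<delta>_def by (rule infdist_nonneg)

lemma \<delta>_pos: "x \<in> D \<Longrightarrow> 0 < \<delta> x"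
  unfolding \<delta>_def using open_D frontier_nonempty
  by (intro infdist_pos_not_in_closed) (auto simp: frontier_def interior_open)

lemma \<delta>_ge_radius: assumes "ball w e \<subseteq> D" shows "e \<le> \<delta> w"
proof -
  have "e \<le> dist w f" if "f \<in> frontier D" for f
    using that assms open_D by (force simp: frontier_def interior_open not_le)
  thus ?thesis
    unfolding \<delta>_def infdist_notempty[OF frontier_nonempty]
      using frontier_nonempty by (intro cINF_greatest) auto
qed

lemma kernel_arg_eq:
  assumes "x \<in> D" "y \<in> D"
  shows "kernel_arg D A0 x y = (cap (dist x y))\<^sup>2 / (cap (\<delta> x) * cap (\<delta> y))"
proof -
  have "delta_e D z = ereal (\<delta> z)" for z using frontier_nonempty by (simp add: delta_e_def \<delta>_def)
  moreover have "0 < cap (\<delta> x)" "0 < cap (\<delta> y)" using assms \<delta>_pos cap_pos by auto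
  ultimately show ?thesis
    unfolding kernel_arg_def by (simp add: min_A0_eq_cap \<delta>_nonneg power2_eq_square)
qed

lemma q_nonneg: "0 \<le> r \<Longrightarrow> 0 \<le> q r x"
  unfolding q_def using cap_nonneg \<delta>_nonneg by simp

lemma \<Phi>_mono: "0 \<le> a \<Longrightarrow> a \<le> b \<Longrightarrow> \<Phi> a \<le> \<Phi> b"
  using \<Phi>_mono_on by (auto simp: mono_on_def)

lemma \<Phi>_ge1: "0 \<le> a \<Longrightarrow> 1 \<le> \<Phi> a"
  using \<Phi>_ge_1 by auto

lemma C\<beta>_ge1: "1 \<le> C\<beta>"
  using \<Phi>_growth[rule_format, of 1 1] \<Phi>_ge1[of 1] by simp

lemma \<Phi>_scale: assumes "0 < t" "1 \<le> c" shows "\<Phi> (c * t) \<le> C\<beta> * c powr \<beta> * \<Phi> t"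
proof -
  have "\<Phi> (c * t) / \<Phi> t \<le> C\<beta> * c powr \<beta>" using \<Phi>_growth[rule_format, of t "c * t"] assms by auto
  moreover have "0 < \<Phi> t" using \<Phi>_ge1[of t] assms by auto
  ultimately show ?thesis by (simp add: field_simps)
qed

lemma borel_measurable_\<delta> [measurable]: "\<delta> \<in> borel_measurable borel"
  unfolding \<delta>_def[abs_def] by measurable

lemma borel_measurable_\<Phi>_q [measurable]: "0 \<le> r \<Longrightarrow> (\<lambda>x. \<Phi> (q r x)) \<in> borel_measurable borel"
proof -
  have "continuous_on UNIV (\<lambda>t. \<Phi> (max 0 t))"
    by (rule continuous_on_compose2[OF \<Phi>_cont]) (auto intro!: continuous_intros)
  hence [measurable]: "(\<lambda>t. \<Phi> (max 0 t)) \<in> borel_measurable borel" by (rule borel_measurable_continuous_onI)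
  have [measurable]: "cap \<in> borel_measurable borel"
    unfolding cap_def[abs_def] by measurable
  assume "0 \<le> r"
  hence "(\<lambda>x. \<Phi> (q r x)) = (\<lambda>x. \<Phi> (max 0 (cap r / cap (\<delta> x))))"
    using q_nonneg by (auto simp: q_def max_def)
  thus ?thesis by simp
qed

lemma J_le_\<Phi>_kernel_arg:
  "x \<in> D \<Longrightarrow> y \<in> D \<Longrightarrow> x \<noteq> y \<Longrightarrow> J x y \<le> C1 * \<Phi> (kernel_arg D A0 x y) * dist x y powr (-(real DIM('a) + \<alpha>))"
  and \<Phi>_kernel_arg_le_J:
  "x \<in> D \<Longrightarrow> y \<in> D \<Longrightarrow> x \<noteq> y \<Longrightarrow> \<Phi> (kernel_arg D A0 x y) \<le> C1 * J x y * dist x y powr (real DIM('a) + \<alpha>)"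
  and J_pos: "x \<in> D \<Longrightarrow> y \<in> D \<Longrightarrow> x \<noteq> y \<Longrightarrow> 0 < J x y"
  using kernel_comparableD[OF J_comparable _ _ _ \<Phi>_ge1[OF kernel_arg_nonneg[OF A0]]] C1 by simp_all

lemma kernel_arg_le:
  assumes "x \<in> D" "y \<in> D" "0 < r" "r \<le> dist x y"
  shows "kernel_arg D A0 x y \<le> (dist x y / r) * max 1 (dist x y / \<delta> y) * q r x"
proof -
  define L where "L = dist x y"
  have "0 < L" using assms unfolding L_def by linarith
  have pos: "0 < cap r" "0 < cap (\<delta> x)" "0 < cap (\<delta> y)" "0 < cap L"
    using cap_pos assms \<open>0 < L\<close> \<delta>_pos by auto
  have "kernel_arg D A0 x y = (cap L / cap r) * (cap L / cap (\<delta> y)) * q r x"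
    using kernel_arg_eq[OF assms(1,2)] pos unfolding L_def q_def by (simp add: power2_eq_square)
  also have "\<dots> \<le> (L / r) * max 1 (L / \<delta> y) * q r x"
  proof (intro mult_mono)
    show "cap L / cap r \<le> L / r"
      using cap_ratio_le[of r L] assms \<open>0 < L\<close> unfolding L_def by (simp add: max_def)
    show "cap L / cap (\<delta> y) \<le> max 1 (L / \<delta> y)"
      using cap_ratio_le[of "\<delta> y" L] \<delta>_pos[OF assms(2)] \<open>0 < L\<close> by simp
  qed (use pos assms \<open>0 < L\<close> q_nonneg in auto)
  finally show ?thesis unfolding L_def .
qed

lemma \<Phi>_kernel_arg_le:
  assumes "x \<in> D" "y \<in> D" "0 < r" "r \<le> dist x y"
  shows "\<Phi> (kernel_arg D A0 x y) \<le> C\<beta> * (dist x y / r) powr \<beta> * (1 + (dist x y / \<delta> y) powr \<beta>) * \<Phi> (q r x)"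
proof -
  define M where "M = (dist x y / r) * max 1 (dist x y / \<delta> y)"
  have "1 \<le> dist x y / r" using assms by simp
  hence "1 \<le> M" unfolding M_def by (metis max.cobounded1 mult_mono' mult_1 zero_le_one)
  have "0 < q r x" using assms \<delta>_pos cap_pos by (simp add: q_def)
  have "\<Phi> (kernel_arg D A0 x y) \<le> \<Phi> (M * q r x)"
    using kernel_arg_le[OF assms] kernel_arg_nonneg[OF A0] unfolding M_def by (intro \<Phi>_mono)
  also have "\<dots> \<le> C\<beta> * M powr \<beta> * \<Phi> (q r x)" using \<open>0 < q r x\<close> \<open>1 \<le> M\<close> by (rule \<Phi>_scale)
  also have "M powr \<beta> \<le> (dist x y / r) powr \<beta> * (1 + (dist x y / \<delta> y) powr \<beta>)"
  proof -
    have "M powr \<beta> = (dist x y / r) powr \<beta> * (max 1 (dist x y / \<delta> y)) powr \<beta>"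
      unfolding M_def by (rule powr_mult)
    moreover have "(max 1 (dist x y / \<delta> y)) powr \<beta> \<le> 1 + (dist x y / \<delta> y) powr \<beta>" by (simp add: max_def)
    ultimately show ?thesis by (simp add: mult_left_mono)
  qed
  finally show ?thesis
    using C\<beta>_ge1 \<Phi>_ge1[OF q_nonneg[of r x]] assms by (simp add: mult_left_mono mult_right_mono mult.assoc)
qed

lemma J_upper:
  assumes "x \<in> D" "y \<in> D" "0 < r" "r \<le> dist x y"
  shows "J x y \<le> C1 * C\<beta> * \<Phi> (q r x) * r powr (-\<beta>) *
    (dist x y powr (\<beta> - real DIM('a) - \<alpha>) + dist x y powr (2 * \<beta> - real DIM('a) - \<alpha>) * \<delta> y powr (-\<beta>))"
proof -
  define L where "L = dist x y"
  have "0 < L" "x \<noteq> y" using assms unfolding L_def by auto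
  have "J x y \<le> C1 * \<Phi> (kernel_arg D A0 x y) * L powr (-(real DIM('a) + \<alpha>))"
    unfolding L_def using J_le_\<Phi>_kernel_arg assms \<open>x \<noteq> y\<close> by blast
  also have "\<dots> \<le> C1 * (C\<beta> * (L / r) powr \<beta> * (1 + (L / \<delta> y) powr \<beta>) * \<Phi> (q r x))
      * L powr (-(real DIM('a) + \<alpha>))"
    using \<Phi>_kernel_arg_le[OF assms] C1 unfolding L_def by (intro mult_right_mono mult_left_mono) auto
  also have "\<dots> = C1 * C\<beta> * \<Phi> (q r x) * r powr (-\<beta>) *
      (L powr (\<beta> - real DIM('a) - \<alpha>) + L powr (2 * \<beta> - real DIM('a) - \<alpha>) * \<delta> y powr (-\<beta>))"
  proof -
    have "(L / r) powr \<beta> = L powr \<beta> * r powr (-\<beta>)" "(L / \<delta> y) powr \<beta> = L powr \<beta> * \<delta> y powr (-\<beta>)"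
      using \<open>0 < L\<close> assms(3) \<delta>_pos[OF assms(2)] by (simp_all add: powr_divide powr_minus_divide)
    moreover have "L powr (\<beta> - real DIM('a) - \<alpha>) = L powr \<beta> * L powr (-(real DIM('a) + \<alpha>))"
      "L powr (2 * \<beta> - real DIM('a) - \<alpha>) = L powr \<beta> * L powr \<beta> * L powr (-(real DIM('a) + \<alpha>))"
      by (simp_all only: powr_add[symmetric]) (simp_all add: algebra_simps)
    ultimately show ?thesis by (simp add: algebra_simps)
  qed
  finally show ?thesis unfolding L_def .
qed

lemma infdist_frontier_integral_bound:
  obtains K where "0 \<le> K"
    "\<And>x R. 0 < R \<Longrightarrow> (\<integral>\<^sup>+y. indicator (ball x R) y * ennreal (\<delta> y powr (-\<beta>)) \<partial>lborel)
       \<le> ennreal (K * R powr (real DIM('a) - \<beta>))"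
  using infdist_powr_ball_integral_bound[OF frontier_closed frontier_nonempty cov s(2) \<beta>(1) s(3)]
  unfolding \<delta>_def by blast

lemma jump_tail_le_dist_integrals:
  assumes "x \<in> D" "0 < r" "r \<le> \<rho>"
  shows "jump_tail D J \<rho> x \<le> ennreal (C1 * C\<beta> * \<Phi> (q r x) * r powr (-\<beta>)) *
    ((\<integral>\<^sup>+y. indicator {y. \<rho> \<le> dist x y} y * ennreal (dist x y powr (\<beta> - real DIM('a) - \<alpha>)) \<partial>lborel)
     + (\<integral>\<^sup>+y. indicator {y. \<rho> \<le> dist x y} y * ennreal (dist x y powr (2 * \<beta> - real DIM('a) - \<alpha>))
          * ennreal (\<delta> y powr (-\<beta>)) \<partial>lborel))"
proof -
  define c where "c = C1 * C\<beta> * \<Phi> (q r x) * r powr (-\<beta>)"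
  have "0 \<le> c" unfolding c_def using C1 C\<beta>_ge1 \<Phi>_ge1[OF q_nonneg[of r x]] assms(2) by simp
  have "indicator D y * indicator {y. \<rho> \<le> dist x y} y * ennreal (J x y)
      \<le> ennreal c * (indicator {y. \<rho> \<le> dist x y} y * ennreal (dist x y powr (\<beta> - real DIM('a) - \<alpha>))
        + indicator {y. \<rho> \<le> dist x y} y * ennreal (dist x y powr (2 * \<beta> - real DIM('a) - \<alpha>))
          * ennreal (\<delta> y powr (-\<beta>)))" for y
  proof (cases "y \<in> D \<and> \<rho> \<le> dist x y")
    case True
    hence "ennreal (J x y) \<le> ennreal (c * (dist x y powr (\<beta> - real DIM('a) - \<alpha>)
        + dist x y powr (2 * \<beta> - real DIM('a) - \<alpha>) * \<delta> y powr (-\<beta>)))"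
      using J_upper[OF assms(1) _ assms(2), of y] assms(3) unfolding c_def by (intro ennreal_leI) auto
    thus ?thesis using True \<open>0 \<le> c\<close> by (simp add: ennreal_mult ennreal_plus)
  qed auto
  hence "jump_tail D J \<rho> x \<le> (\<integral>\<^sup>+y. ennreal c * (indicator {y. \<rho> \<le> dist x y} y
      * ennreal (dist x y powr (\<beta> - real DIM('a) - \<alpha>))
        + indicator {y. \<rho> \<le> dist x y} y * ennreal (dist x y powr (2 * \<beta> - real DIM('a) - \<alpha>))
          * ennreal (\<delta> y powr (-\<beta>))) \<partial>lborel)"
    unfolding jump_tail_def by (rule nn_integral_mono)
  thus ?thesis unfolding c_def by (simp add: nn_integral_cmult nn_integral_add)
qed

text \<open>The step \<open>\<rho>\<^sup>\<beta>\<^sup>-\<^sup>\<alpha> \<le> r\<^sup>\<beta>\<^sup>-\<^sup>\<alpha>\<close> for \<open>r \<le> \<rho>\<close> is where \<open>\<beta> < \<alpha>\<close> is used.\<close>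

lemma jump_tail_bound:
  obtains K where "0 \<le> K"
    "\<And>x r \<rho>. x \<in> D \<Longrightarrow> 0 < r \<Longrightarrow> r \<le> \<rho> \<Longrightarrow> jump_tail D J \<rho> x \<le> ennreal (K * \<Phi> (q r x) * r powr (-\<alpha>))"
proof -
  let ?d = "real DIM('a)"
  obtain KA where KA: "0 \<le> KA"
    "\<And>x R. 0 < R \<Longrightarrow> (\<integral>\<^sup>+y. indicator (ball x R) y * ennreal (\<delta> y powr (-\<beta>)) \<partial>lborel)
       \<le> ennreal (KA * R powr (?d - \<beta>))"
    by (rule infdist_frontier_integral_bound) auto
  define K0 where "K0 = (unit_ball_vol ?d * 2 powr ?d + KA * 2 powr (?d - \<beta>)) / (1 - 2 powr (\<beta> - \<alpha>))"
  have "2 powr (\<beta> - \<alpha>) < 1" using \<beta> by (simp add: powr_less_one)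
  hence "0 \<le> K0" unfolding K0_def using KA(1) by simp
  have "jump_tail D J \<rho> x \<le> ennreal (C1 * C\<beta> * K0 * \<Phi> (q r x) * r powr (-\<alpha>))"
    if x: "x \<in> D" and r: "0 < r" "r \<le> \<rho>" for x r \<rho>
  proof -
    define c where "c = C1 * C\<beta> * \<Phi> (q r x) * r powr (-\<beta>)"
    have "0 \<le> c" unfolding c_def using C1 C\<beta>_ge1 \<Phi>_ge1[OF q_nonneg[of r x]] r by simp
    have "(\<integral>\<^sup>+y. indicator {y. \<rho> \<le> dist x y} y * ennreal (dist x y powr (\<beta> - ?d - \<alpha>)) \<partial>lborel)
        \<le> ennreal (unit_ball_vol ?d * 2 powr ?d * \<rho> powr (\<beta> - \<alpha>) / (1 - 2 powr (\<beta> - \<alpha>)))"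
      using nn_integral_dist_powr_tail_le_lborel[where p = "\<beta> - real DIM('a) - \<alpha>" and \<rho> = \<rho> and x = x]
        \<beta> r by simp
    moreover have "(\<integral>\<^sup>+y. indicator {y. \<rho> \<le> dist x y} y * ennreal (dist x y powr (2 * \<beta> - ?d - \<alpha>))
        * ennreal (\<delta> y powr (-\<beta>)) \<partial>lborel)
        \<le> ennreal (KA * 2 powr (?d - \<beta>) * \<rho> powr (\<beta> - \<alpha>) / (1 - 2 powr (\<beta> - \<alpha>)))"
      using nn_integral_dist_powr_tail_le[OF _ KA(2), where p = "2 * \<beta> - real DIM('a) - \<alpha>" and \<rho> = \<rho>]
        \<beta> s r KA(1) by simp
    ultimately have "jump_tail D J \<rho> x
        \<le> ennreal c * (ennreal (unit_ball_vol ?d * 2 powr ?d * \<rho> powr (\<beta> - \<alpha>) / (1 - 2 powr (\<beta> - \<alpha>)))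
        + ennreal (KA * 2 powr (?d - \<beta>) * \<rho> powr (\<beta> - \<alpha>) / (1 - 2 powr (\<beta> - \<alpha>))))"
      using jump_tail_le_dist_integrals[OF x r] unfolding c_def
      by (meson add_mono mult_left_mono order_trans zero_le)
    also have "\<dots> = ennreal (c * (K0 * \<rho> powr (\<beta> - \<alpha>)))"
      using \<open>0 \<le> c\<close> \<open>2 powr (\<beta> - \<alpha>) < 1\<close> KA(1)
      by (simp add: K0_def ennreal_mult ennreal_plus[symmetric]
        add_divide_distrib distrib_right del: ennreal_plus)
    also have "c * (K0 * \<rho> powr (\<beta> - \<alpha>)) \<le> c * (K0 * r powr (\<beta> - \<alpha>))"
      using \<open>0 \<le> c\<close> \<open>0 \<le> K0\<close> r \<beta> by (intro mult_left_mono powr_mono2') auto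
    also have "c * (K0 * r powr (\<beta> - \<alpha>)) = C1 * C\<beta> * K0 * \<Phi> (q r x) * r powr (-\<alpha>)"
      unfolding c_def using r by (simp add: powr_add[symmetric] ac_simps)
    finally show ?thesis by (simp add: ennreal_leI)
  qed
  moreover have "0 \<le> C1 * C\<beta> * K0" using C1 C\<beta>_ge1 \<open>0 \<le> K0\<close> by simp
  ultimately show ?thesis using that by blast
qed

lemma kernel_arg_ge_near_boundary:
  assumes "x \<in> D" "w \<in> D" "x \<noteq> w" "0 < r" "dist x w < r / 2" "\<kappa> * r / 4 \<le> \<delta> w"
    and "\<delta> x \<le> \<kappa> * r / 8"
  shows "(\<kappa> / 8)\<^sup>2 * q r x \<le> kernel_arg D A0 x w"
proof -
  define a b c e where "a = cap r" "b = cap (\<delta> x)" "c = cap (\<delta> w)" "e = cap (dist x w)"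
  have pos: "0 < a" "0 < b" "0 < c" "0 < e"
    unfolding a_b_c_e_def using cap_pos assms \<delta>_pos by auto
  have "\<delta> w \<le> \<delta> x + dist x w" unfolding \<delta>_def
    using infdist_triangle[of w "frontier D" x] by (simp add: dist_commute)
  hence far: "\<kappa> * r / 8 \<le> dist x w" and "\<delta> w \<le> r"
    using assms \<kappa> mult_left_le_one_le[of r \<kappa>] by linarith+
  have "(\<kappa> / 8) * a \<le> cap ((\<kappa> / 8) * r)" unfolding a_b_c_e_def using \<kappa> assms(4) by (intro cap_scale) auto
  also have "\<dots> \<le> e" unfolding a_b_c_e_def using far by (intro cap_mono) simp
  finally have ea: "(\<kappa> / 8) * a \<le> e" .
  have ca: "c \<le> a" unfolding a_b_c_e_def using \<open>\<delta> w \<le> r\<close> by (rule cap_mono)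
  have "(\<kappa> / 8)\<^sup>2 * q r x = ((\<kappa> / 8) * a)\<^sup>2 / (b * a)"
    unfolding q_def a_b_c_e_def[symmetric] using pos by (simp add: power2_eq_square field_simps)
  also have "\<dots> \<le> e\<^sup>2 / (b * a)" using ea pos \<kappa> by (intro divide_right_mono power_mono) auto
  also have "\<dots> \<le> e\<^sup>2 / (b * c)" using pos ca by (intro divide_left_mono mult_left_mono) auto
  finally show ?thesis unfolding a_b_c_e_def kernel_arg_eq[OF assms(1,2)] .
qed

lemma \<Phi>_q_le_\<Phi>_kernel_arg:
  assumes "x \<in> D" "w \<in> D" "x \<noteq> w" "0 < r" "dist x w < r / 2" "\<kappa> * r / 4 \<le> \<delta> w"
  shows "\<Phi> (q r x) \<le> max (C\<beta> * (64 / \<kappa>\<^sup>2) powr \<beta>) (\<Phi> (8 / \<kappa>)) * \<Phi> (kernel_arg D A0 x w)"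
proof -
  let ?k = "kernel_arg D A0 x w"
  have "1 \<le> \<Phi> ?k" using \<Phi>_ge1[OF kernel_arg_nonneg[OF A0]] .
  have "0 < q r x" using assms \<delta>_pos cap_pos by (simp add: q_def)
  show ?thesis
  proof (cases "\<delta> x \<le> \<kappa> * r / 8")
    case True
    have "1 \<le> 64 / \<kappa>\<^sup>2" using \<kappa> power_le_one[of \<kappa> 2] by (simp add: field_simps)
    have "q r x = (64 / \<kappa>\<^sup>2) * ((\<kappa> / 8)\<^sup>2 * q r x)" using \<kappa> by (simp add: power2_eq_square field_simps)
    hence "\<Phi> (q r x) \<le> C\<beta> * (64 / \<kappa>\<^sup>2) powr \<beta> * \<Phi> ((\<kappa> / 8)\<^sup>2 * q r x)"
      using \<Phi>_scale[OF _ \<open>1 \<le> 64 / \<kappa>\<^sup>2\<close>, of "(\<kappa> / 8)\<^sup>2 * q r x"] \<open>0 < q r x\<close> \<kappa> by simp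
    also have "\<dots> \<le> C\<beta> * (64 / \<kappa>\<^sup>2) powr \<beta> * \<Phi> ?k"
      using kernel_arg_ge_near_boundary[OF assms True] \<open>0 < q r x\<close> C\<beta>_ge1
        by (intro mult_left_mono \<Phi>_mono) auto
    also have "\<dots> \<le> max (C\<beta> * (64 / \<kappa>\<^sup>2) powr \<beta>) (\<Phi> (8 / \<kappa>)) * \<Phi> ?k"
      using \<open>1 \<le> \<Phi> ?k\<close> by (intro mult_right_mono) auto
    finally show ?thesis .
  next
    case False
    have "0 < \<kappa> * r" using \<kappa> assms(4) by simp
    hence "0 < \<delta> x" using False by linarith
    moreover have "r * \<kappa> \<le> 8 * \<delta> x" using False by (simp add: mult.commute)
    ultimately have "0 < \<delta> x" "r / \<delta> x \<le> 8 / \<kappa>" using \<kappa> by (simp_all add: divide_simps mult.commute)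
    have "q r x \<le> max 1 (r / \<delta> x)" unfolding q_def using cap_ratio_le[OF \<open>0 < \<delta> x\<close>, of r] assms(4) by simp
    also have "\<dots> \<le> 8 / \<kappa>" using \<open>r / \<delta> x \<le> 8 / \<kappa>\<close> \<kappa> by simp
    finally have "\<Phi> (q r x) \<le> \<Phi> (8 / \<kappa>)" using \<open>0 < q r x\<close> by (intro \<Phi>_mono) auto
    also have "\<dots> \<le> max (C\<beta> * (64 / \<kappa>\<^sup>2) powr \<beta>) (\<Phi> (8 / \<kappa>)) * \<Phi> ?k"
    proof -
      have "\<Phi> (8 / \<kappa>) * 1 \<le> max (C\<beta> * (64 / \<kappa>\<^sup>2) powr \<beta>) (\<Phi> (8 / \<kappa>)) * \<Phi> ?k"
        using \<open>1 \<le> \<Phi> ?k\<close> \<Phi>_ge1[of "8 / \<kappa>"] \<kappa> by (intro mult_mono) auto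
      thus ?thesis by simp
    qed
    finally show ?thesis .
  qed
qed

definition J_lower_const :: real where
  "J_lower_const = C1 * max (C\<beta> * (64 / \<kappa>\<^sup>2) powr \<beta>) (\<Phi> (8 / \<kappa>))"

lemma J_lower_const_pos: "0 < J_lower_const"
  unfolding J_lower_const_def using \<Phi>_ge1[of "8 / \<kappa>"] \<kappa> C1 by (simp add: less_max_iff_disj)

lemma J_lower:
  assumes "x \<in> D" "w \<in> D" "x \<noteq> w" "0 < r" "dist x w < r / 2" "\<kappa> * r / 4 \<le> \<delta> w"
  shows "\<Phi> (q r x) * r powr (-(real DIM('a) + \<alpha>)) \<le> J_lower_const * J x w"
proof -
  let ?Kq = "max (C\<beta> * (64 / \<kappa>\<^sup>2) powr \<beta>) (\<Phi> (8 / \<kappa>))"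
  have "1 \<le> ?Kq" using \<Phi>_ge1[of "8 / \<kappa>"] \<kappa> by simp
  have "0 < J x w" using J_pos assms by simp
  have "dist x w powr (real DIM('a) + \<alpha>) \<le> r powr (real DIM('a) + \<alpha>)"
    using assms \<alpha> by (intro powr_mono2) auto
  hence "\<Phi> (kernel_arg D A0 x w) \<le> C1 * J x w * r powr (real DIM('a) + \<alpha>)"
    using \<Phi>_kernel_arg_le_J[OF assms(1-3)] \<open>0 < J x w\<close> C1 by (smt (verit) mult_left_mono mult_pos_pos)
  hence "\<Phi> (q r x) \<le> ?Kq * (C1 * J x w * r powr (real DIM('a) + \<alpha>))"
    using \<Phi>_q_le_\<Phi>_kernel_arg[OF assms] \<open>1 \<le> ?Kq\<close> by (smt (verit) mult_left_mono)
  hence "\<Phi> (q r x) * r powr (-(real DIM('a) + \<alpha>))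
      \<le> ?Kq * (C1 * J x w * r powr (real DIM('a) + \<alpha>)) * r powr (-(real DIM('a) + \<alpha>))"
    by (rule mult_right_mono) simp
  also have "\<dots> = J_lower_const * J x w * (r powr (real DIM('a) + \<alpha>) * r powr (-(real DIM('a) + \<alpha>)))"
    unfolding J_lower_const_def by (simp only: ac_simps)
  also have "r powr (real DIM('a) + \<alpha>) * r powr (-(real DIM('a) + \<alpha>)) = 1"
    using assms(4) by (simp add: powr_add[symmetric])
  finally show ?thesis by simp
qed

lemma emeasure_interior_points_ge:
  assumes "x \<in> D" "0 < r" "r \<le> R0"
  shows "ennreal (unit_ball_vol DIM('a) * (\<kappa> / 4) ^ DIM('a) * r ^ DIM('a))
    \<le> emeasure lborel {w \<in> D. dist x w < r / 2 \<and> \<kappa> * r / 4 \<le> \<delta> w}"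
proof -
  obtain z where z: "z \<in> D" "ball z (\<kappa> * (r / 2)) \<subseteq> D \<inter> ball x (r / 2)"
    using fat_ball[of x "r / 2"] assms closure_subset by auto
  have "ball z (\<kappa> * r / 4) \<subseteq> {w \<in> D. dist x w < r / 2 \<and> \<kappa> * r / 4 \<le> \<delta> w}"
  proof
    fix w assume w: "w \<in> ball z (\<kappa> * r / 4)"
    have "ball w (\<kappa> * r / 4) \<subseteq> ball z (\<kappa> * (r / 2))"
    proof
      fix v assume "v \<in> ball w (\<kappa> * r / 4)"
      hence "dist z v < \<kappa> * r / 4 + \<kappa> * r / 4" using w dist_triangle[of z v w] by (simp add: dist_commute)
      thus "v \<in> ball z (\<kappa> * (r / 2))" by simp
    qed
    moreover have "w \<in> ball z (\<kappa> * (r / 2))" using w mult_pos_pos[OF \<kappa>(1) assms(2)] by simp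
    ultimately show "w \<in> {w \<in> D. dist x w < r / 2 \<and> \<kappa> * r / 4 \<le> \<delta> w}"
      using z(2) \<delta>_ge_radius[of w "\<kappa> * r / 4"] by auto
  qed
  hence "emeasure lborel (ball z (\<kappa> * r / 4)) \<le> emeasure lborel {w \<in> D. dist x w < r / 2 \<and> \<kappa> * r / 4 \<le> \<delta> w}"
    by (rule emeasure_mono) measurable
  thus ?thesis using \<kappa> assms(2) by (simp add: emeasure_ball power_mult_distrib power_divide mult.assoc)
qed

lemma \<Phi>_q_le:
  assumes "0 < r"
  shows "\<Phi> (q r x) \<le> C\<beta> * \<Phi> 1 * (1 + r powr \<beta> * \<delta> x powr (-\<beta>))"
proof (cases "\<delta> x = 0")
  case True
  hence "\<Phi> (q r x) \<le> \<Phi> 1" using \<Phi>_mono[of 0 1] by (simp add: q_def cap_zero)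
  also have "\<dots> \<le> C\<beta> * \<Phi> 1 * (1 + r powr \<beta> * \<delta> x powr (-\<beta>))"
  proof -
    have "1 * 1 \<le> C\<beta> * (1 + r powr \<beta> * \<delta> x powr (-\<beta>))" using C\<beta>_ge1 by (intro mult_mono) auto
    from mult_left_mono[OF this, of "\<Phi> 1"] show ?thesis using \<Phi>_ge1[of 1] by (simp add: ac_simps)
  qed
  finally show ?thesis .
next
  case False
  hence "0 < \<delta> x" using \<delta>_nonneg[of x] by simp
  define M where "M = max 1 (r / \<delta> x)"
  have "q r x \<le> M" unfolding q_def M_def using cap_ratio_le[OF \<open>0 < \<delta> x\<close>, of r] assms by simp
  hence "\<Phi> (q r x) \<le> \<Phi> (M * 1)" using q_nonneg[of r x] assms by (intro \<Phi>_mono) auto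
  also have "\<dots> \<le> C\<beta> * M powr \<beta> * \<Phi> 1" by (rule \<Phi>_scale) (auto simp: M_def)
  also have "M powr \<beta> \<le> 1 + (r / \<delta> x) powr \<beta>" unfolding M_def by (simp add: max_def)
  also have "(r / \<delta> x) powr \<beta> = r powr \<beta> * \<delta> x powr (-\<beta>)"
    by (simp add: powr_divide powr_minus_divide)
  finally show ?thesis
    using C\<beta>_ge1 \<Phi>_ge1[of 1] by (simp add: mult_left_mono mult_right_mono algebra_simps)
qed

lemma \<Phi>_q_ball_integral_bound:
  obtains K where "0 \<le> K"
    "\<And>w r. 0 < r \<Longrightarrow> (\<integral>\<^sup>+x. indicator (ball w r) x * ennreal (\<Phi> (q r x)) \<partial>lborel)
        \<le> ennreal (K * r powr real DIM('a))"
proof -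
  let ?d = "real DIM('a)" and ?C = "C\<beta> * \<Phi> 1"
  obtain KA where KA: "0 \<le> KA"
    "\<And>x R. 0 < R \<Longrightarrow> (\<integral>\<^sup>+y. indicator (ball x R) y * ennreal (\<delta> y powr (-\<beta>)) \<partial>lborel)
       \<le> ennreal (KA * R powr (?d - \<beta>))"
    by (rule infdist_frontier_integral_bound) auto
  have "0 \<le> ?C" using C\<beta>_ge1 \<Phi>_ge1[of 1] by simp
  have "(\<integral>\<^sup>+x. indicator (ball w r) x * ennreal (\<Phi> (q r x)) \<partial>lborel)
      \<le> ennreal (?C * (unit_ball_vol ?d + KA) * r powr ?d)"
    if "0 < r" for w r
  proof -
    have "(\<integral>\<^sup>+x. indicator (ball w r) x * ennreal (\<Phi> (q r x)) \<partial>lborel)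
        \<le> (\<integral>\<^sup>+x. ennreal ?C * (indicator (ball w r) x
          + ennreal (r powr \<beta>) * (indicator (ball w r) x * ennreal (\<delta> x powr (-\<beta>)))) \<partial>lborel)"
    proof (intro nn_integral_mono)
      fix x
      have "ennreal (\<Phi> (q r x)) \<le> ennreal (?C * (1 + r powr \<beta> * \<delta> x powr (-\<beta>)))"
        by (rule ennreal_leI) (rule \<Phi>_q_le[OF that])
      also have "\<dots> = ennreal ?C * (1 + ennreal (r powr \<beta>) * ennreal (\<delta> x powr (-\<beta>)))"
        using \<open>0 \<le> ?C\<close> by (simp add: ennreal_mult ennreal_plus)
      finally show "indicator (ball w r) x * ennreal (\<Phi> (q r x))
          \<le> ennreal ?C * (indicator (ball w r) x
            + ennreal (r powr \<beta>) * (indicator (ball w r) x * ennreal (\<delta> x powr (-\<beta>))))"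
        by (simp add: indicator_def)
    qed
    also have "\<dots> = ennreal ?C * (emeasure lborel (ball w r)
        + ennreal (r powr \<beta>) * (\<integral>\<^sup>+x. indicator (ball w r) x * ennreal (\<delta> x powr (-\<beta>)) \<partial>lborel))"
      by (simp add: nn_integral_cmult nn_integral_add)
    also have "\<dots> \<le> ennreal ?C * (ennreal (unit_ball_vol ?d * r powr ?d)
        + ennreal (r powr \<beta>) * ennreal (KA * r powr (?d - \<beta>)))"
      using KA(2)[OF that, of w] that
        by (intro mult_left_mono add_mono) (auto simp: emeasure_ball powr_realpow)
    also have "\<dots> = ennreal (?C * (unit_ball_vol ?d + KA) * r powr ?d)"
      using that KA(1) \<open>0 \<le> ?C\<close>
      by (simp add: ennreal_mult[symmetric] ennreal_plus[symmetric]
        powr_add[symmetric] algebra_simps del: ennreal_plus)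
    finally show ?thesis .
  qed
  moreover have "0 \<le> ?C * (unit_ball_vol ?d + KA)" using \<open>0 \<le> ?C\<close> KA(1) by simp
  ultimately show ?thesis using that by blast
qed

definition near_weight :: "real \<Rightarrow> ('a \<Rightarrow> real) \<Rightarrow> ennreal" where
  "near_weight r u = (\<integral>\<^sup>+x. \<integral>\<^sup>+w. indicator D x * indicator D w * indicator {w. dist x w < r / 2} w
     * ennreal ((u w)\<^sup>2 * \<Phi> (q r x)) \<partial>lborel \<partial>lborel)"

lemma near_weight_bound:
  obtains K where "0 \<le> K"
    "\<And>u r. u \<in> borel_measurable borel \<Longrightarrow> 0 < r \<Longrightarrow> near_weight r u
        \<le> ennreal (K * r powr real DIM('a)) * l2sq D u"
proof -
  obtain K where K: "0 \<le> K"
    "\<And>w r. 0 < r \<Longrightarrow> (\<integral>\<^sup>+x. indicator (ball w r) x * ennreal (\<Phi> (q r x)) \<partial>lborel)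
        \<le> ennreal (K * r powr real DIM('a))"
    by (rule \<Phi>_q_ball_integral_bound) auto
  have "near_weight r u \<le> ennreal (K * r powr real DIM('a)) * l2sq D u"
    if [measurable]: "u \<in> borel_measurable borel" and "0 < r" for u r
  proof -
    define f where "f p = indicator D (fst p) * indicator D (snd p)
      * indicator {p. dist (fst p) (snd p) < r / 2} p
      * ennreal ((u (snd p))\<^sup>2 * \<Phi> (q r (fst p)))" for p :: "'a \<times> 'a"
    have [measurable]: "(\<lambda>x. \<Phi> (q r x)) \<in> borel_measurable lborel" using \<open>0 < r\<close> by simp
    have [measurable]: "f \<in> borel_measurable (lborel \<Otimes>\<^sub>M lborel)" unfolding f_def by measurable
    have "near_weight r u = (\<integral>\<^sup>+x. \<integral>\<^sup>+w. f (x, w) \<partial>lborel \<partial>lborel)"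
      by (simp add: near_weight_def f_def indicator_def)
    also have "\<dots> = (\<integral>\<^sup>+w. \<integral>\<^sup>+x. f (x, w) \<partial>lborel \<partial>lborel)"
      by (rule lborel_pair.Fubini[symmetric]) measurable
    also have "\<dots> \<le> (\<integral>\<^sup>+w. ennreal (K * r powr real DIM('a)) * (indicator D w * ennreal ((u w)\<^sup>2)) \<partial>lborel)"
    proof (intro nn_integral_mono)
      fix w
      have "(\<integral>\<^sup>+x. f (x, w) \<partial>lborel)
          \<le> (\<integral>\<^sup>+x. (indicator D w * ennreal ((u w)\<^sup>2))
            * (indicator (ball w r) x * ennreal (\<Phi> (q r x))) \<partial>lborel)"
        using \<open>0 < r\<close> by (intro nn_integral_mono)
          (auto simp: f_def indicator_def dist_commute ennreal_mult')
      also have "\<dots> = (indicator D w * ennreal ((u w)\<^sup>2))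
        * (\<integral>\<^sup>+x. indicator (ball w r) x * ennreal (\<Phi> (q r x)) \<partial>lborel)"
        by (intro nn_integral_cmult) measurable
      also have "\<dots> \<le> (indicator D w * ennreal ((u w)\<^sup>2)) * ennreal (K * r powr real DIM('a))"
        using K(2)[OF \<open>0 < r\<close>] by (rule mult_left_mono) simp
      finally show "(\<integral>\<^sup>+x. f (x, w) \<partial>lborel)
          \<le> ennreal (K * r powr real DIM('a)) * (indicator D w * ennreal ((u w)\<^sup>2))"
        by (simp add: mult.commute)
    qed
    also have "\<dots> = ennreal (K * r powr real DIM('a)) * l2sq D u"
      unfolding l2sq_def by (rule nn_integral_cmult) measurable
    finally show ?thesis .
  qed
  with K(1) show ?thesis using that by blast
qed

lemma tail_weight_le_near_point:
  assumes "x \<in> D" "w \<in> D" "0 < r" "dist x w < r / 2" "\<kappa> * r / 4 \<le> \<delta> w" "0 \<le> c"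
  shows "2 * (u x)\<^sup>2 * (c * \<Phi> (q r x) * r powr (-\<alpha>))
    \<le> 4 * c * (J_lower_const + 1) * r powr real DIM('a)
      * ((u x - u w)\<^sup>2 * J x w + r powr (-\<alpha> - real DIM('a)) * ((u w)\<^sup>2 * \<Phi> (q r x)))"
proof -
  let ?d = "real DIM('a)" and ?L = "J_lower_const"
  define T where "T = c * \<Phi> (q r x) * r powr (-\<alpha>)"
  have "0 \<le> T" unfolding T_def using assms(6) \<Phi>_ge1[OF q_nonneg[of r x]] assms(3) by simp
  have J0: "0 \<le> (u x - u w)\<^sup>2 * J x w" using J_pos[OF assms(1,2)] by (cases "x = w") auto
  have rT: "T = c * r powr ?d * (\<Phi> (q r x) * r powr (-(?d + \<alpha>)))"
    "T = c * r powr ?d * (r powr (-\<alpha> - ?d) * \<Phi> (q r x))"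
    unfolding T_def using assms(3) by (simp_all add: powr_add[symmetric])
  have A: "(u x - u w)\<^sup>2 * T \<le> c * r powr ?d * (?L * ((u x - u w)\<^sup>2 * J x w))"
  proof (cases "x = w")
    case False
    have "(u x - u w)\<^sup>2 * T = c * r powr ?d * ((u x - u w)\<^sup>2 * (\<Phi> (q r x) * r powr (-(?d + \<alpha>))))"
      using rT(1) by (simp add: ac_simps)
    also have "\<dots> \<le> c * r powr ?d * ((u x - u w)\<^sup>2 * (?L * J x w))"
      using J_lower[OF assms(1,2) False assms(3-5)] assms(6) by (intro mult_left_mono) auto
    finally show ?thesis by (simp add: ac_simps)
  qed simp
  have B: "(u w)\<^sup>2 * T = c * r powr ?d * (r powr (-\<alpha> - ?d) * ((u w)\<^sup>2 * \<Phi> (q r x)))"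
    using rT(2) by (simp add: ac_simps)
  have "2 * (u x)\<^sup>2 \<le> 4 * (u x - u w)\<^sup>2 + 4 * (u w)\<^sup>2"
    using sum_squares_ge_zero[of "u x - 2 * u w" 0] by (simp add: power2_eq_square algebra_simps)
  from mult_right_mono[OF this \<open>0 \<le> T\<close>]
  have "2 * (u x)\<^sup>2 * T \<le> 4 * ((u x - u w)\<^sup>2 * T) + 4 * ((u w)\<^sup>2 * T)" by (simp add: algebra_simps)
  also have "\<dots> \<le> 4 * (c * r powr ?d * (?L * ((u x - u w)\<^sup>2 * J x w)))
      + 4 * (c * r powr ?d * (r powr (-\<alpha> - ?d) * ((u w)\<^sup>2 * \<Phi> (q r x))))"
    using A B by linarith
  also have "\<dots> = 4 * c * r powr ?d * (?L * ((u x - u w)\<^sup>2 * J x w)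
      + r powr (-\<alpha> - ?d) * ((u w)\<^sup>2 * \<Phi> (q r x)))"
    by (simp add: algebra_simps)
  also have "\<dots> \<le> 4 * c * r powr ?d * ((?L + 1) * ((u x - u w)\<^sup>2 * J x w
      + r powr (-\<alpha> - ?d) * ((u w)\<^sup>2 * \<Phi> (q r x))))"
    using J0 J_lower_const_pos assms(6) \<Phi>_ge1[OF q_nonneg[of r x]] assms(3)
    by (intro mult_left_mono) (auto simp: algebra_simps)
  finally show ?thesis unfolding T_def by (simp only: ac_simps)
qed

lemma tail_term_le_average:
  obtains K where "0 \<le> K"
    "\<And>u x \<rho> r. x \<in> D \<Longrightarrow> 0 < r \<Longrightarrow> r \<le> \<rho> \<Longrightarrow> r \<le> R0 \<Longrightarrow>
      ennreal (2 * (u x)\<^sup>2) * jump_tail D J \<rho> x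
      \<le> (\<integral>\<^sup>+w. ennreal K * (indicator D x * indicator D w * indicator {w. dist x w < \<rho>} w
            * ennreal ((u x - u w)\<^sup>2 * J x w)
          + ennreal (r powr (-\<alpha> - real DIM('a))) * (indicator D x * indicator D w
            * indicator {w. dist x w < r / 2} w * ennreal ((u w)\<^sup>2 * \<Phi> (q r x)))) \<partial>lborel)"
proof -
  let ?d = "real DIM('a)"
  obtain KW where KW: "0 \<le> KW"
    "\<And>x r \<rho>. x \<in> D \<Longrightarrow> 0 < r \<Longrightarrow> r \<le> \<rho> \<Longrightarrow> jump_tail D J \<rho> x \<le> ennreal (KW * \<Phi> (q r x) * r powr (-\<alpha>))"
    by (rule jump_tail_bound) auto
  define \<sigma> where "\<sigma> = unit_ball_vol DIM('a) * (\<kappa> / 4) ^ DIM('a)"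
  have "0 < \<sigma>" unfolding \<sigma>_def using \<kappa> by simp
  define K where "K = 4 * KW * (J_lower_const + 1) / \<sigma>"
  have "0 \<le> K" unfolding K_def using KW(1) J_lower_const_pos \<open>0 < \<sigma>\<close> by simp
  moreover have "ennreal (2 * (u x)\<^sup>2) * jump_tail D J \<rho> x \<le> (\<integral>\<^sup>+w. ennreal K * F w \<partial>lborel)"
    if x: "x \<in> D" and r: "0 < r" "r \<le> \<rho>" "r \<le> R0"
      and F_def: "F = (\<lambda>w. indicator D x * indicator D w * indicator {w. dist x w < \<rho>} w
            * ennreal ((u x - u w)\<^sup>2 * J x w)
          + ennreal (r powr (-\<alpha> - ?d)) * (indicator D x * indicator D w
            * indicator {w. dist x w < r / 2} w * ennreal ((u w)\<^sup>2 * \<Phi> (q r x))))" for u x \<rho> r F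
  proof -
    define S where "S = {w \<in> D. dist x w < r / 2 \<and> \<kappa> * r / 4 \<le> \<delta> w}"
    have "ennreal (2 * (u x)\<^sup>2) * jump_tail D J \<rho> x
        \<le> ennreal (2 * (u x)\<^sup>2) * ennreal (KW * \<Phi> (q r x) * r powr (-\<alpha>))"
      using KW(2)[OF x r(1,2)] by (rule mult_left_mono) simp
    also have "\<dots> = ennreal (2 * (u x)\<^sup>2 * (KW * \<Phi> (q r x) * r powr (-\<alpha>)))" by (simp add: ennreal_mult')
    also have "\<dots> \<le> (\<integral>\<^sup>+w. indicator S w * (ennreal (1 / (\<sigma> * r ^ DIM('a)))
          * (ennreal (K * (\<sigma> * r ^ DIM('a))) * F w)) \<partial>lborel)"
    proof (rule le_average_nn_integral)
      show "S \<in> sets lborel" unfolding S_def by measurable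
      show "ennreal (\<sigma> * r ^ DIM('a)) \<le> emeasure lborel S"
        using emeasure_interior_points_ge[OF x r(1,3)] unfolding S_def \<sigma>_def by (simp add: mult.assoc)
      show "0 < \<sigma> * r ^ DIM('a)" using \<open>0 < \<sigma>\<close> r by simp
      fix w assume "w \<in> S"
      hence w: "w \<in> D" "dist x w < r / 2" "\<kappa> * r / 4 \<le> \<delta> w" unfolding S_def by auto
      have "K * (\<sigma> * r ^ DIM('a)) = 4 * KW * (J_lower_const + 1) * r powr ?d"
        unfolding K_def using \<open>0 < \<sigma>\<close> r by (simp add: powr_realpow)
      moreover have "0 \<le> (u x - u w)\<^sup>2 * J x w" using J_pos[OF x w(1)] by (cases "x = w") auto
      moreover have "F w = ennreal ((u x - u w)\<^sup>2 * J x w + r powr (-\<alpha> - ?d) * ((u w)\<^sup>2 * \<Phi> (q r x)))"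
        using x w r \<open>0 \<le> (u x - u w)\<^sup>2 * J x w\<close> \<Phi>_ge1[OF q_nonneg[of r x]]
        by (simp add: F_def ennreal_plus ennreal_mult')
      moreover have "0 \<le> 4 * KW * (J_lower_const + 1) * r powr ?d" using KW(1) J_lower_const_pos by simp
      ultimately show "ennreal (2 * (u x)\<^sup>2 * (KW * \<Phi> (q r x) * r powr (-\<alpha>)))
          \<le> ennreal (K * (\<sigma> * r ^ DIM('a))) * F w"
        using tail_weight_le_near_point[OF x w(1) r(1) w(2,3) KW(1), of u]
        by (simp only: ennreal_mult'[symmetric] ennreal_leI)
    qed
    also have "\<dots> \<le> (\<integral>\<^sup>+w. ennreal K * F w \<partial>lborel)"
    proof (intro nn_integral_mono)
      fix w
      have "ennreal (1 / (\<sigma> * r ^ DIM('a))) * ennreal (K * (\<sigma> * r ^ DIM('a))) = ennreal K"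
        using \<open>0 < \<sigma>\<close> r(1) \<open>0 \<le> K\<close> by (simp add: ennreal_mult[symmetric])
      thus "indicator S w * (ennreal (1 / (\<sigma> * r ^ DIM('a))) * (ennreal (K * (\<sigma> * r ^ DIM('a))) * F w))
          \<le> ennreal K * F w"
        by (simp add: indicator_def mult.assoc[symmetric])
    qed
    finally show ?thesis .
  qed
  ultimately show ?thesis using that by blast
qed

lemma tail_energy_le_average:
  obtains K where "0 \<le> K"
    "\<And>\<rho> r u. u \<in> borel_measurable borel \<Longrightarrow> 0 < r \<Longrightarrow> r \<le> \<rho> \<Longrightarrow> r \<le> R0 \<Longrightarrow>
      tail_energy D J \<rho> u \<le> ennreal K * (2 * jump_energy (trunc_kernel \<rho> J) D u
        + ennreal (r powr (-\<alpha> - real DIM('a))) * near_weight r u)"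
proof -
  let ?d = "real DIM('a)" and ?M = "lborel \<Otimes>\<^sub>M lborel :: ('a \<times> 'a) measure"
  obtain K where K: "0 \<le> K"
    "\<And>u x \<rho> r. x \<in> D \<Longrightarrow> 0 < r \<Longrightarrow> r \<le> \<rho> \<Longrightarrow> r \<le> R0 \<Longrightarrow>
      ennreal (2 * (u x)\<^sup>2) * jump_tail D J \<rho> x
      \<le> (\<integral>\<^sup>+w. ennreal K * (indicator D x * indicator D w * indicator {w. dist x w < \<rho>} w
            * ennreal ((u x - u w)\<^sup>2 * J x w)
          + ennreal (r powr (-\<alpha> - ?d)) * (indicator D x * indicator D w
            * indicator {w. dist x w < r / 2} w * ennreal ((u w)\<^sup>2 * \<Phi> (q r x)))) \<partial>lborel)"
    by (rule tail_term_le_average) auto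
  have "tail_energy D J \<rho> u \<le> ennreal K * (2 * jump_energy (trunc_kernel \<rho> J) D u
      + ennreal (r powr (-\<alpha> - ?d)) * near_weight r u)"
    if [measurable]: "u \<in> borel_measurable borel" and r: "0 < r" "r \<le> \<rho>" "r \<le> R0" for \<rho> r u
  proof -
    define F1 where "F1 p = indicator D (fst p) * indicator D (snd p)
      * indicator {p. dist (fst p) (snd p) < \<rho>} p
      * ennreal ((u (fst p) - u (snd p))\<^sup>2 * J (fst p) (snd p))" for p :: "'a \<times> 'a"
    define F2 where "F2 p = indicator D (fst p) * indicator D (snd p)
      * indicator {p. dist (fst p) (snd p) < r / 2} p
      * ennreal ((u (snd p))\<^sup>2 * \<Phi> (q r (fst p)))" for p :: "'a \<times> 'a"
    have F1_eq: "F1 = (\<lambda>p. indicator (D \<times> D) p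
        * ennreal ((u (fst p) - u (snd p))\<^sup>2 * trunc_kernel \<rho> J (fst p) (snd p)))"
      by (auto simp: F1_def trunc_kernel_def indicator_def fun_eq_iff)
    have [measurable]: "F1 \<in> borel_measurable ?M" unfolding F1_eq
      by (intro borel_measurable_jump_integrand
        borel_measurable_kernel_range(1)[OF J_measurable]) measurable
    have [measurable]: "(\<lambda>x. \<Phi> (q r x)) \<in> borel_measurable lborel" using r by simp
    have [measurable]: "F2 \<in> borel_measurable ?M" unfolding F2_def by measurable
    have "tail_energy D J \<rho> u
        \<le> (\<integral>\<^sup>+x. \<integral>\<^sup>+w. ennreal K * (F1 (x, w) + ennreal (r powr (-\<alpha> - ?d)) * F2 (x, w)) \<partial>lborel \<partial>lborel)"
      unfolding tail_energy_def using K(2)[OF _ r]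
      by (intro nn_integral_mono) (auto simp: F1_def F2_def indicator_def)
    also have "\<dots> = ennreal K * ((\<integral>\<^sup>+x. \<integral>\<^sup>+w. F1 (x, w) \<partial>lborel \<partial>lborel)
        + ennreal (r powr (-\<alpha> - ?d)) * (\<integral>\<^sup>+x. \<integral>\<^sup>+w. F2 (x, w) \<partial>lborel \<partial>lborel))"
      by (simp add: lborel.nn_integral_fst nn_integral_add nn_integral_cmult)
    also have "(\<integral>\<^sup>+x. \<integral>\<^sup>+w. F1 (x, w) \<partial>lborel \<partial>lborel) = 2 * jump_energy (trunc_kernel \<rho> J) D u"
      using jump_energy_trunc_eq_iterated[OF J_measurable, of u \<rho>] by (simp add: F1_def indicator_def)
    also have "(\<integral>\<^sup>+x. \<integral>\<^sup>+w. F2 (x, w) \<partial>lborel \<partial>lborel) = near_weight r u"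
      by (simp add: near_weight_def F2_def indicator_def)
    finally show ?thesis .
  qed
  with K(1) show ?thesis using that by blast
qed

lemma tail_energy_bound:
  obtains C where "0 \<le> C"
    "\<And>\<rho> u. 0 < \<rho> \<Longrightarrow> u \<in> borel_measurable borel \<Longrightarrow> tail_energy D J \<rho> u
      \<le> ennreal C * (jump_energy (trunc_kernel \<rho> J) D u + ennreal ((min \<rho> R0) powr (-\<alpha>)) * l2sq D u)"
proof -
  let ?d = "real DIM('a)"
  obtain K where K: "0 \<le> K"
    "\<And>\<rho> r u. u \<in> borel_measurable borel \<Longrightarrow> 0 < r \<Longrightarrow> r \<le> \<rho> \<Longrightarrow> r \<le> R0 \<Longrightarrow>
      tail_energy D J \<rho> u \<le> ennreal K * (2 * jump_energy (trunc_kernel \<rho> J) D u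
        + ennreal (r powr (-\<alpha> - ?d)) * near_weight r u)"
    by (rule tail_energy_le_average) auto
  obtain K' where K': "0 \<le> K'"
    "\<And>u r. u \<in> borel_measurable borel \<Longrightarrow> 0 < r \<Longrightarrow> near_weight r u \<le> ennreal (K' * r powr ?d) * l2sq D u"
    by (rule near_weight_bound) auto
  have "tail_energy D J \<rho> u \<le> ennreal (K * (2 + K'))
      * (jump_energy (trunc_kernel \<rho> J) D u + ennreal ((min \<rho> R0) powr (-\<alpha>)) * l2sq D u)"
    if "0 < \<rho>" and u: "u \<in> borel_measurable borel" for \<rho> u
  proof -
    define r where "r = min \<rho> R0"
    have r: "0 < r" "r \<le> \<rho>" "r \<le> R0" unfolding r_def using \<open>0 < \<rho>\<close> R0 by auto
    let ?E = "jump_energy (trunc_kernel \<rho> J) D u" and ?X = "ennreal (r powr (-\<alpha>)) * l2sq D u"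
    have "ennreal (r powr (-\<alpha> - ?d)) * near_weight r u
        \<le> ennreal (r powr (-\<alpha> - ?d)) * (ennreal (K' * r powr ?d) * l2sq D u)"
      using K'(2)[OF u r(1)] by (rule mult_left_mono) simp
    also have "\<dots> = ennreal K' * ?X"
    proof -
      have "r powr (-\<alpha> - ?d) * (K' * r powr ?d) = K' * r powr (-\<alpha>)"
        using r(1) by (simp add: powr_add[symmetric])
      hence "ennreal (r powr (-\<alpha> - ?d)) * ennreal (K' * r powr ?d) = ennreal K' * ennreal (r powr (-\<alpha>))"
        using K'(1) by (metis ennreal_mult' powr_ge_zero)
      thus ?thesis by (metis mult.assoc)
    qed
    finally have "tail_energy D J \<rho> u \<le> ennreal K * (2 * ?E + ennreal K' * ?X)"
      using K(2)[OF u r] by (meson add_left_mono mult_left_mono order_trans zero_le)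
    also have "2 * ?E + ennreal K' * ?X \<le> (2 + ennreal K') * (?E + ?X)"
      by (simp add: distrib_left distrib_right add_mono add_increasing add_increasing2)
    finally have "tail_energy D J \<rho> u \<le> ennreal K * ((2 + ennreal K') * (?E + ?X))"
      by (simp add: mult_left_mono)
    thus ?thesis using K(1) K'(1) by (simp add: r_def ennreal_mult ennreal_plus mult.assoc)
  qed
  moreover have "0 \<le> K * (2 + K')" using K(1) K'(1) by simp
  ultimately show ?thesis using that by blast
qed

end

section \<open>Domains with empty boundary\<close>

lemma kernel_arg_frontier_empty:
  assumes "frontier D = {}" "0 < A0"
  shows "kernel_arg D A0 x y \<le> 1"
proof (cases A0)
  case (real a)
  hence "0 < a" using assms(2) by simp
  have "delta_e D z = \<infinity>" for z using assms(1) by (simp add: delta_e_def)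
  hence "kernel_arg D A0 x y = (min (dist x y) a)\<^sup>2 / (a * a)"
    unfolding kernel_arg_def using real \<open>0 < a\<close> by (simp add: min_def power2_eq_square)
  moreover have "(min (dist x y) a)\<^sup>2 \<le> a * a"
    using \<open>0 < a\<close> by (simp add: power2_eq_square mult_mono min_def)
  ultimately show ?thesis using \<open>0 < a\<close> by simp
qed (use assms in \<open>simp_all add: kernel_arg_def delta_e_def\<close>)

lemma jump_tail_le_of_power_bound:
  fixes J :: "'a::euclidean_space \<Rightarrow> 'a \<Rightarrow> real"
  assumes "\<And>y. y \<in> D \<Longrightarrow> x \<noteq> y \<Longrightarrow> J x y \<le> c * dist x y powr (-(real DIM('a) + \<alpha>))"
    and "0 \<le> c" "0 < \<alpha>" "0 < \<rho>"
  shows "jump_tail D J \<rho> x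
    \<le> ennreal (c * unit_ball_vol DIM('a) * 2 powr DIM('a) / (1 - 2 powr (-\<alpha>)) * \<rho> powr (-\<alpha>))"
proof -
  let ?d = "real DIM('a)"
  have "jump_tail D J \<rho> x
      \<le> (\<integral>\<^sup>+y. ennreal c * (indicator {y. \<rho> \<le> dist x y} y * ennreal (dist x y powr (-(?d + \<alpha>)))) \<partial>lborel)"
    unfolding jump_tail_def
  proof (intro nn_integral_mono)
    fix y
    show "indicator D y * indicator {y. \<rho> \<le> dist x y} y * ennreal (J x y)
        \<le> ennreal c * (indicator {y. \<rho> \<le> dist x y} y * ennreal (dist x y powr (-(?d + \<alpha>))))"
    proof (cases "y \<in> D \<and> \<rho> \<le> dist x y")
      case True
      hence "x \<noteq> y" using assms(4) by auto
      hence "ennreal (J x y) \<le> ennreal (c * dist x y powr (-(?d + \<alpha>)))"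
        using assms(1)[of y] True by (intro ennreal_leI) auto
      thus ?thesis using True assms(2) by (simp add: ennreal_mult)
    qed auto
  qed
  also have "\<dots> = ennreal c
      * (\<integral>\<^sup>+y. indicator {y. \<rho> \<le> dist x y} y * ennreal (dist x y powr (-(?d + \<alpha>))) \<partial>lborel)"
    by (rule nn_integral_cmult) measurable
  also have "\<dots> \<le> ennreal c * ennreal (unit_ball_vol ?d * 2 powr ?d * \<rho> powr (-\<alpha>) / (1 - 2 powr (-\<alpha>)))"
    using nn_integral_dist_powr_tail_le_lborel[where p = "-(real DIM('a) + \<alpha>)" and \<rho> = \<rho> and x = x]
      assms(3,4)
    by (intro mult_left_mono) simp_all
  also have "\<dots> = ennreal (c * unit_ball_vol ?d * 2 powr ?d / (1 - 2 powr (-\<alpha>)) * \<rho> powr (-\<alpha>))"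
    using assms(2) by (simp add: ennreal_mult'[symmetric] ac_simps)
  finally show ?thesis .
qed

lemma tail_energy_le_of_uniform_tail:
  fixes J :: "'a::euclidean_space \<Rightarrow> 'a \<Rightarrow> real"
  assumes [measurable]: "u \<in> borel_measurable borel" "D \<in> sets borel"
    and "0 \<le> M" and tail: "\<And>x. x \<in> D \<Longrightarrow> jump_tail D J \<rho> x \<le> ennreal M"
  shows "tail_energy D J \<rho> u \<le> ennreal (2 * M) * l2sq D u"
proof -
  have "tail_energy D J \<rho> u \<le> (\<integral>\<^sup>+x. ennreal (2 * M) * (indicator D x * ennreal ((u x)\<^sup>2)) \<partial>lborel)"
    unfolding tail_energy_def
  proof (intro nn_integral_mono)
    fix x
    show "indicator D x * ennreal (2 * (u x)\<^sup>2) * jump_tail D J \<rho> x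
        \<le> ennreal (2 * M) * (indicator D x * ennreal ((u x)\<^sup>2))"
      using mult_left_mono[OF tail[of x], of "ennreal (2 * (u x)\<^sup>2)"] \<open>0 \<le> M\<close>
      by (cases "x \<in> D") (simp_all add: ennreal_mult' ac_simps)
  qed
  also have "\<dots> = ennreal (2 * M) * l2sq D u"
    unfolding l2sq_def by (rule nn_integral_cmult) measurable
  finally show ?thesis .
qed

lemma J_le_of_frontier_empty:
  fixes J :: "'a::euclidean_space \<Rightarrow> 'a \<Rightarrow> real"
  assumes "frontier D = {}" and \<Phi>: "mono_on {0..} \<Phi>" "\<forall>t\<ge>0. 1 \<le> \<Phi> t" and "0 < A0" "0 < C1"
    and "kernel_comparable D J \<alpha> \<Phi> A0 C1" "x \<in> D" "y \<in> D" "x \<noteq> y"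
  shows "J x y \<le> C1 * \<Phi> 1 * dist x y powr (-(real DIM('a) + \<alpha>))"
proof -
  have "0 \<le> kernel_arg D A0 x y" "kernel_arg D A0 x y \<le> 1"
    using kernel_arg_nonneg[OF assms(4)] kernel_arg_frontier_empty[OF assms(1,4)] .
  hence \<Phi>_k: "1 \<le> \<Phi> (kernel_arg D A0 x y)" "\<Phi> (kernel_arg D A0 x y) \<le> \<Phi> 1"
    using \<Phi> by (auto simp: mono_on_def)
  have "J x y \<le> C1 * \<Phi> (kernel_arg D A0 x y) * dist x y powr (-(real DIM('a) + \<alpha>))"
    using kernel_comparableD(1)[OF assms(6-9) \<Phi>_k(1) assms(5)] .
  also have "\<dots> \<le> C1 * \<Phi> 1 * dist x y powr (-(real DIM('a) + \<alpha>))"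
    using \<Phi>_k(2) assms(5) by (intro mult_right_mono mult_left_mono) auto
  finally show ?thesis .
qed

lemma tail_energy_bound_frontier_empty:
  fixes D :: "'a::euclidean_space set" and J :: "'a \<Rightarrow> 'a \<Rightarrow> real"
  assumes "open D" "frontier D = {}" "0 < \<alpha>" "0 < R0"
    and \<Phi>: "mono_on {0..} \<Phi>" "\<forall>t\<ge>0. 1 \<le> \<Phi> t" and "0 < A0" "0 < C1"
    and J_comparable: "kernel_comparable D J \<alpha> \<Phi> A0 C1"
  obtains C where "0 \<le> C"
    "\<And>\<rho> u. 0 < \<rho> \<Longrightarrow> u \<in> borel_measurable borel \<Longrightarrow> tail_energy D J \<rho> u
      \<le> ennreal C * (jump_energy (trunc_kernel \<rho> J) D u + ennreal ((min \<rho> R0) powr (-\<alpha>)) * l2sq D u)"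
proof -
  let ?d = "real DIM('a)"
  define KE where "KE = C1 * \<Phi> 1 * unit_ball_vol ?d * 2 powr ?d / (1 - 2 powr (-\<alpha>))"
  have "2 powr (-\<alpha>) < 1" using assms(3) by (simp add: powr_less_one)
  moreover have \<Phi>1: "1 \<le> \<Phi> 1" using \<Phi>(2) by simp
  ultimately have "0 \<le> KE" unfolding KE_def using assms(8)
    by (intro divide_nonneg_nonneg mult_nonneg_nonneg) auto
  have "J x y \<le> C1 * \<Phi> 1 * dist x y powr (-(?d + \<alpha>))" if "x \<in> D" "y \<in> D" "x \<noteq> y" for x y
    using J_le_of_frontier_empty[OF assms(2) \<Phi> assms(7,8) J_comparable that] .
  hence "jump_tail D J \<rho> x \<le> ennreal (KE * \<rho> powr (-\<alpha>))" if "x \<in> D" "0 < \<rho>" for x \<rho>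
    using jump_tail_le_of_power_bound[of D x J "C1 * \<Phi> 1" \<alpha> \<rho>] that \<Phi>1 assms(3,8) by (simp add: KE_def)
  moreover have "ennreal (KE * \<rho> powr (-\<alpha>)) \<le> ennreal (KE * (min \<rho> R0) powr (-\<alpha>))" if "0 < \<rho>" for \<rho>
    using that assms(3,4) \<open>0 \<le> KE\<close> by (intro ennreal_leI mult_left_mono powr_mono2') auto
  ultimately have tail: "jump_tail D J \<rho> x \<le> ennreal (KE * (min \<rho> R0) powr (-\<alpha>))" if "x \<in> D" "0 < \<rho>" for x \<rho>
    using that by (meson order_trans)
  have "tail_energy D J \<rho> u \<le> ennreal (2 * KE)
      * (jump_energy (trunc_kernel \<rho> J) D u + ennreal ((min \<rho> R0) powr (-\<alpha>)) * l2sq D u)"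
    if "0 < \<rho>" "u \<in> borel_measurable borel" for \<rho> u
  proof -
    have "tail_energy D J \<rho> u \<le> ennreal (2 * (KE * (min \<rho> R0) powr (-\<alpha>))) * l2sq D u"
      using that \<open>0 \<le> KE\<close> borel_open[OF assms(1)] tail by (intro tail_energy_le_of_uniform_tail) auto
    also have "\<dots> \<le> ennreal (2 * KE)
        * (jump_energy (trunc_kernel \<rho> J) D u + ennreal ((min \<rho> R0) powr (-\<alpha>)) * l2sq D u)"
      using \<open>0 \<le> KE\<close> by (simp add: ennreal_mult' mult.assoc add_increasing mult_left_mono)
    finally show ?thesis .
  qed
  with \<open>0 \<le> KE\<close> show ?thesis using that[of "2 * KE"] by simp
qed

section \<open>The comparison of the energies\<close>

lemma upper_matuszewska_lessE:
  assumes "upper_matuszewska \<Phi> < b"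
  obtains \<beta> C where "0 \<le> \<beta>" "ereal \<beta> < b" "\<forall>s r. 0 < s \<and> s \<le> r \<longrightarrow> \<Phi> r / \<Phi> s \<le> C * (r / s) powr \<beta>"
proof -
  obtain \<beta> where "ereal \<beta> < b" "0 \<le> \<beta>"
    "\<exists>C. \<forall>s r. 0 < s \<and> s \<le> r \<longrightarrow> \<Phi> r / \<Phi> s \<le> C * (r / s) powr \<beta>"
    using assms unfolding upper_matuszewska_def Inf_less_iff by auto
  thus ?thesis using that by blast
qed

lemma ereal_less_diff_imp_less:
  fixes a :: ereal
  shows "ereal \<beta> < ereal d - a \<Longrightarrow> a < ereal (d - \<beta>)"
  by (cases a) auto

lemma energy_bound_of_assumption_A:
  fixes D :: "'a::euclidean_space set" and J :: "'a \<Rightarrow> 'a \<Rightarrow> real"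
  assumes "0 < \<alpha>" "kappa_fat D \<kappa> R0" "assumption_A D \<alpha> J"
  obtains C where "0 < C"
    "\<And>\<rho> u. 0 < \<rho> \<Longrightarrow> u \<in> borel_measurable borel \<Longrightarrow> jump_energy J D u
      \<le> ennreal C * (jump_energy (trunc_kernel \<rho> J) D u + ennreal ((min \<rho> R0) powr (-\<alpha>)) * l2sq D u)"
proof -
  obtain \<Phi> A0 C1 where \<Phi>: "continuous_on {0..} \<Phi>" "mono_on {0..} \<Phi>" "\<forall>t\<ge>0. 1 \<le> \<Phi> t"
    and idx: "upper_matuszewska \<Phi> < min (ereal (real DIM('a)) - assouad_dim (frontier D)) (ereal \<alpha>)"
    and A0: "0 < A0" and C1: "1 < C1"
    and Jc: "kernel_comparable D J \<alpha> \<Phi> A0 C1"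
    using assms(3) unfolding assumption_A_def kernel_comparable_def by blast
  have Jm: "(\<lambda>p. if p \<in> D \<times> D then J (fst p) (snd p) else 0) \<in> borel_measurable borel"
    and Jsym: "\<forall>x\<in>D. \<forall>y\<in>D. J x y = J y x"
    using assms(3) unfolding assumption_A_def by blast+
  have "open D" "0 < R0" using assms(2) unfolding kappa_fat_def by auto
  have "0 < C1" using C1 by simp
  have J_nonneg: "0 \<le> J x y" if "x \<in> D" "y \<in> D" "x \<noteq> y" for x y
    using kernel_comparableD(3)[OF Jc that \<Phi>(3)[rule_format, OF kernel_arg_nonneg[OF A0]] \<open>0 < C1\<close>] by simp
  obtain K where K: "0 \<le> K" "\<And>\<rho> u. 0 < \<rho> \<Longrightarrow> u \<in> borel_measurable borel \<Longrightarrow> tail_energy D J \<rho> u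
      \<le> ennreal K * (jump_energy (trunc_kernel \<rho> J) D u + ennreal ((min \<rho> R0) powr (-\<alpha>)) * l2sq D u)"
  proof (cases "frontier D = {}")
    case True
    show ?thesis
      by (rule tail_energy_bound_frontier_empty[OF \<open>open D\<close> True assms(1) \<open>0 < R0\<close> \<Phi>(2,3) A0 \<open>0 < C1\<close> Jc])
        (rule that)
  next
    case False
    obtain \<beta> C\<beta> where \<beta>: "0 \<le> \<beta>" "ereal \<beta> < min (ereal (real DIM('a)) - assouad_dim (frontier D)) (ereal \<alpha>)"
      and growth: "\<forall>s r. 0 < s \<and> s \<le> r \<longrightarrow> \<Phi> r / \<Phi> s \<le> C\<beta> * (r / s) powr \<beta>"
      by (rule upper_matuszewska_lessE[OF idx]) auto
    have "\<beta> < \<alpha>" using \<beta>(2) by simp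
    have "assouad_dim (frontier D) < ereal (real DIM('a) - \<beta>)"
      using \<beta>(2) by (intro ereal_less_diff_imp_less) simp
    then obtain s Cs where s: "0 \<le> s" "ereal s < ereal (real DIM('a) - \<beta>)" "0 < Cs"
      "covering_bound (frontier D) s Cs"
      by (rule assouad_dim_lessE)
    interpret fat_domain_kernel D J \<alpha> \<kappa> R0 \<Phi> A0 C1 \<beta> C\<beta> s Cs
      using assms(1,2) False \<Phi> \<beta>(1) \<open>\<beta> < \<alpha>\<close> growth s A0 C1 Jm Jc by unfold_locales auto
    show ?thesis by (rule tail_energy_bound) (rule that)
  qed
  show ?thesis
  proof (rule that)
    show "0 < 1 + K" using K(1) by simp
    show "jump_energy J D u \<le> ennreal (1 + K)
      * (jump_energy (trunc_kernel \<rho> J) D u + ennreal ((min \<rho> R0) powr (-\<alpha>)) * l2sq D u)"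
      if "0 < \<rho>" "u \<in> borel_measurable borel" for \<rho> u
      by (rule jump_energy_le_of_tail_energy[OF Jm Jsym J_nonneg that(2,1) K(1) K(2)[OF that]])
  qed
qed

lemma jump_energy_restrict: "jump_energy K D u = jump_energy K D (\<lambda>x. indicator D x * u x)"
proof -
  have "indicator (D \<times> D) p * ennreal ((u (fst p) - u (snd p))\<^sup>2 * K (fst p) (snd p))
      = indicator (D \<times> D) p * ennreal ((indicator D (fst p) * u (fst p) - indicator D (snd p) * u (snd p))\<^sup>2
          * K (fst p) (snd p))" for p
    by (cases "p \<in> D \<times> D") (auto simp: mem_Times_iff)
  thus ?thesis unfolding jump_energy_def by simp
qed

lemma l2sq_restrict: "l2sq D u = l2sq D (\<lambda>x. indicator D x * u x)"
  unfolding l2sq_def by (intro nn_integral_cong) (auto simp: indicator_def)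

theorem proposition3p4:
  fixes D :: "'a::euclidean_space set" and J :: "'a \<Rightarrow> 'a \<Rightarrow> real"
    and \<alpha> \<kappa> R0 :: real
  assumes "0 < \<alpha>" and "\<alpha> < 2"
    and "kappa_fat D \<kappa> R0"
    and "assouad_dim (frontier D) < ereal (real DIM('a))"
    and "assumption_A D \<alpha> J"
  shows "\<exists>C>0. \<forall>\<rho> u. 0 < \<rho> \<and> ereal \<rho> < diam_e D \<and> in_F J D u \<longrightarrow>
           jump_energy J D u \<le> ennreal C * (jump_energy (trunc_kernel \<rho> J) D u
              + ennreal ((min \<rho> R0) powr (-\<alpha>)) * l2sq D u)"
proof -
  obtain C where C: "0 < C" "\<And>\<rho> u. 0 < \<rho> \<Longrightarrow> u \<in> borel_measurable borel \<Longrightarrow> jump_energy J D u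
      \<le> ennreal C * (jump_energy (trunc_kernel \<rho> J) D u + ennreal ((min \<rho> R0) powr (-\<alpha>)) * l2sq D u)"
    by (rule energy_bound_of_assumption_A[OF assms(1,3,5)]) auto
  show ?thesis
  proof (intro exI[of _ C] conjI allI impI C(1))
    fix \<rho> u assume h: "0 < \<rho> \<and> ereal \<rho> < diam_e D \<and> in_F J D u"
    hence "(\<lambda>x. indicator D x * u x) \<in> borel_measurable borel" unfolding in_F_def by simp
    with h show "jump_energy J D u \<le> ennreal C * (jump_energy (trunc_kernel \<rho> J) D u
        + ennreal ((min \<rho> R0) powr (-\<alpha>)) * l2sq D u)"
      unfolding jump_energy_restrict[of _ D u] l2sq_restrict[of D u] using C(2) by blast
  qed
qed

end
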